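(* Let $\Phi$ be an irreducible reduced root system with basis $\Delta$. Let $\alpha,\beta$ be long roots with $\alpha\le\beta$. Write $\beta=\sum_{\sigma\in J}n_\sigma\sigma$ and $\alpha=\sum_{\tau\in K}m_\tau\tau$ where $J,K$ are non-empty subsets of $\Delta$ and the $n_\sigma$ (resp. $m_\tau$) are non-zero integers all of the same sign. Then: (i) if $0<\alpha\le\beta$, there is a simple path from $\beta$ to $\alpha$; (ii) if $\alpha<0<\beta$, there is a simple path from $\beta$ to $\alpha$ if and only if some long simple root belongs to both $J$ and $K$; and there is a path from $\beta$ to $\alpha$ if and only if there exist a long root $\sigma\in J$ and a long root $\tau\in K$ with $(\sigma|\tau)\neq0$; (iii) if $\alpha\le\beta<0$, there is a simple path from $\beta$ to $\alpha$.
   Context: $(\cdot|\cdot)$ is a $W$-invariant scalar product with minimal squared root length $1$, maximal squared root length $r$; long roots have squared length $r$; $\Delta_{\mathrm{lg}},\Delta_{\mathrm{sh}}$ are the long and short simple roots. For $x,y$ in the ambient space, $y\le x$ means $x-y$ is a non-negative combination of simple roots. For a long root $\gamma=\sum_{\delta\in\Delta}n_\delta\delta$, $\mathrm{ht}^\vee(\gamma)=\sum_{\delta\in\Delta_{\mathrm{lg}}}n_\delta+\frac1r\sum_{\delta\in\Delta_{\mathrm{sh}}}n_\delta$; $\tilde\alpha$ is the highest root. Level of a long root: $L(\gamma)=\mathrm{ht}^\vee(\tilde\alpha)-\mathrm{ht}^\vee(\gamma)$ if $\gamma>0$, and $L(\gamma)=\mathrm{ht}^\vee(\tilde\alpha)-\mathrm{ht}^\vee(\gamma)-1$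 if $\gamma<0$. For long roots $\beta',\alpha'$ and a positive root $\gamma$, $\beta'\xrightarrow{\gamma}\alpha'$ means $\alpha'=s_\gamma(\beta')$ and $L(\alpha')=L(\beta')+1$. A path from $\beta$ to $\alpha$ is a sequence of long roots $\beta=\beta_0\xrightarrow{\gamma_1}\beta_1\cdots\xrightarrow{\gamma_k}\beta_k=\alpha$ with positive roots $\gamma_i$; it is a simple path if all $\gamma_i$ are simple roots. *)

theory Defs
  imports "HOL-Analysis.Analysis"
begin

definition rs_refl :: "'a::euclidean_space \<Rightarrow> 'a \<Rightarrow> 'a" where
  "rs_refl \<gamma> x = x - (2 * (x \<bullet> \<gamma>) / (\<gamma> \<bullet> \<gamma>)) *\<^sub>R \<gamma>"

definition root_system :: "'a::euclidean_space set \<Rightarrow> bool" where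
  "root_system \<Phi> \<longleftrightarrow> finite \<Phi> \<and> 0 \<notin> \<Phi> \<and> span \<Phi> = UNIV \<and>
     (\<forall>\<alpha>\<in>\<Phi>. \<forall>\<beta>\<in>\<Phi>. rs_refl \<alpha> \<beta> \<in> \<Phi>) \<and>
     (\<forall>\<alpha>\<in>\<Phi>. \<forall>\<beta>\<in>\<Phi>. 2 * (\<beta> \<bullet> \<alpha>) / (\<alpha> \<bullet> \<alpha>) \<in> \<int>)"

definition rs_reduced :: "'a::euclidean_space set \<Rightarrow> bool" where
  "rs_reduced \<Phi> \<longleftrightarrow> (\<forall>\<alpha>\<in>\<Phi>. \<forall>c::real. c *\<^sub>R \<alpha> \<in> \<Phi> \<longrightarrow> c = 1 \<or> c = -1)"

definition irreducible_rs :: "'a::euclidean_space set \<Rightarrow> bool" where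
  "irreducible_rs \<Phi> \<longleftrightarrow> \<Phi> \<noteq> {} \<and>
     \<not> (\<exists>A B. A \<noteq> {} \<and> B \<noteq> {} \<and> A \<union> B = \<Phi> \<and> A \<inter> B = {} \<and>
            (\<forall>a\<in>A. \<forall>b\<in>B. a \<bullet> b = 0))"

definition rs_basis :: "'a::euclidean_space set \<Rightarrow> 'a set \<Rightarrow> bool" where
  "rs_basis \<Phi> \<Delta> \<longleftrightarrow> \<Delta> \<subseteq> \<Phi> \<and> independent \<Delta> \<and>
     (\<forall>\<gamma>\<in>\<Phi>. \<exists>c::'a \<Rightarrow> int. \<gamma> = (\<Sum>\<delta>\<in>\<Delta>. of_int (c \<delta>) *\<^sub>R \<delta>) \<and>
        ((\<forall>\<delta>\<in>\<Delta>. c \<delta> \<ge> 0) \<or> (\<forall>\<delta>\<in>\<Delta>. c \<delta> \<le> 0)))"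

definition rle :: "'a::euclidean_space set \<Rightarrow> 'a \<Rightarrow> 'a \<Rightarrow> bool" where
  "rle \<Delta> y x \<longleftrightarrow> (\<exists>c::'a \<Rightarrow> real. (\<forall>\<delta>\<in>\<Delta>. c \<delta> \<ge> 0) \<and> x - y = (\<Sum>\<delta>\<in>\<Delta>. c \<delta> *\<^sub>R \<delta>))"

definition rless :: "'a::euclidean_space set \<Rightarrow> 'a \<Rightarrow> 'a \<Rightarrow> bool" where
  "rless \<Delta> y x \<longleftrightarrow> rle \<Delta> y x \<and> y \<noteq> x"

definition max_sq :: "'a::euclidean_space set \<Rightarrow> real" where
  "max_sq \<Phi> = Max ((\<lambda>\<gamma>. \<gamma> \<bullet> \<gamma>) ` \<Phi>)"

definition min_sq :: "'a::euclidean_space set \<Rightarrow> real" where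
  "min_sq \<Phi> = Min ((\<lambda>\<gamma>. \<gamma> \<bullet> \<gamma>) ` \<Phi>)"

definition rr :: "'a::euclidean_space set \<Rightarrow> real" where
  "rr \<Phi> = max_sq \<Phi> / min_sq \<Phi>"

definition long :: "'a::euclidean_space set \<Rightarrow> 'a \<Rightarrow> bool" where
  "long \<Phi> \<gamma> \<longleftrightarrow> \<gamma> \<in> \<Phi> \<and> \<gamma> \<bullet> \<gamma> = max_sq \<Phi>"

definition positive_root :: "'a::euclidean_space set \<Rightarrow> 'a set \<Rightarrow> 'a \<Rightarrow> bool" where
  "positive_root \<Phi> \<Delta> \<gamma> \<longleftrightarrow> \<gamma> \<in> \<Phi> \<and> rless \<Delta> 0 \<gamma>"

definition htv :: "'a::euclidean_space set \<Rightarrow> 'a set \<Rightarrow> 'a \<Rightarrow> real" where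
  "htv \<Phi> \<Delta> \<gamma> = (\<Sum>\<delta>\<in>\<Delta>. (if long \<Phi> \<delta> then 1 else 1 / rr \<Phi>) * representation \<Delta> \<gamma> \<delta>)"

definition highest_root :: "'a::euclidean_space set \<Rightarrow> 'a set \<Rightarrow> 'a" where
  "highest_root \<Phi> \<Delta> = (THE \<gamma>. \<gamma> \<in> \<Phi> \<and> (\<forall>\<beta>\<in>\<Phi>. rle \<Delta> \<beta> \<gamma>))"

definition level :: "'a::euclidean_space set \<Rightarrow> 'a set \<Rightarrow> 'a \<Rightarrow> real" where
  "level \<Phi> \<Delta> \<gamma> =
     (if rless \<Delta> 0 \<gamma> then htv \<Phi> \<Delta> (highest_root \<Phi> \<Delta>) - htv \<Phi> \<Delta> \<gamma>
      else htv \<Phi> \<Delta> (highest_root \<Phi> \<Delta>) - htv \<Phi> \<Delta> \<gamma> - 1)"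

definition edge :: "'a::euclidean_space set \<Rightarrow> 'a set \<Rightarrow> 'a \<Rightarrow> 'a \<Rightarrow> 'a \<Rightarrow> bool" where
  "edge \<Phi> \<Delta> \<beta>' \<gamma> \<alpha>' \<longleftrightarrow> long \<Phi> \<beta>' \<and> long \<Phi> \<alpha>' \<and> positive_root \<Phi> \<Delta> \<gamma> \<and>
     \<alpha>' = rs_refl \<gamma> \<beta>' \<and> level \<Phi> \<Delta> \<alpha>' = level \<Phi> \<Delta> \<beta>' + 1"

definition path_in :: "'a::euclidean_space set \<Rightarrow> 'a set \<Rightarrow> 'a set \<Rightarrow> 'a \<Rightarrow> 'a \<Rightarrow> bool" where
  "path_in \<Phi> \<Delta> G \<beta> \<alpha> \<longleftrightarrow> (\<exists>bs gs. length bs = Suc (length gs) \<and> bs ! 0 = \<beta> \<and>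
       bs ! length gs = \<alpha> \<and> (\<forall>i \<le> length gs. long \<Phi> (bs ! i)) \<and> set gs \<subseteq> G \<and>
       (\<forall>i < length gs. edge \<Phi> \<Delta> (bs ! i) (gs ! i) (bs ! Suc i)))"

definition rpath :: "'a::euclidean_space set \<Rightarrow> 'a set \<Rightarrow> 'a \<Rightarrow> 'a \<Rightarrow> bool" where
  "rpath \<Phi> \<Delta> \<beta> \<alpha> \<longleftrightarrow> path_in \<Phi> \<Delta> \<Phi> \<beta> \<alpha>"

definition rs_simple_path :: "'a::euclidean_space set \<Rightarrow> 'a set \<Rightarrow> 'a \<Rightarrow> 'a \<Rightarrow> bool" where
  "rs_simple_path \<Phi> \<Delta> \<beta> \<alpha> \<longleftrightarrow> path_in \<Phi> \<Delta> \<Delta> \<beta> \<alpha>"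

end

theory Submission
  imports Defs
begin

text \<open>
  Write \<open>ht\<^sup>\<vee>\<close> for the dual height. Roots have integral coordinates of constant sign on the
  simple roots, and for a long root \<open>\<gamma>\<close>, \<open>ht\<^sup>\<vee>(\<gamma>)\<close> is the height of its coroot, an integer. An
  edge raises the level by one, so it lowers \<open>ht\<^sup>\<vee>\<close> by one between roots of the same sign and by
  two when it passes from a positive to a negative root.

  Between long roots \<open>\<alpha> \<le> \<beta>\<close> of the same sign one descends by induction on
  \<open>ht\<^sup>\<vee>(\<beta>) - ht\<^sup>\<vee>(\<alpha>)\<close>: a simple root \<open>\<delta>\<close> with positive coordinate in \<open>\<beta> - \<alpha>\<close> and acute to
  \<open>\<beta> - \<alpha>\<close> is acute to \<open>\<beta>\<close> or obtuse to \<open>\<alpha>\<close>, and reflecting \<open>\<beta>\<close> (resp. \<open>\<alpha>\<close>) in \<open>\<delta>\<close> moves one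
  level while staying between \<open>\<alpha>\<close> and \<open>\<beta>\<close>.

  A path from a positive to a negative root crosses zero along a single edge. As positive long
  roots have \<open>ht\<^sup>\<vee> \<ge> 1\<close>, that edge goes from a long simple root \<open>\<sigma> \<le> \<beta>\<close> to \<open>-\<tau>\<close> with \<open>\<tau>\<close> long
  simple, \<open>\<alpha> \<le> -\<tau>\<close> and \<open>(\<sigma>|\<tau>) \<noteq> 0\<close>, and \<open>\<sigma> = \<tau>\<close> if its label is simple. Conversely, reflecting
  in \<open>\<sigma>\<close> (if \<open>\<sigma> = \<tau>\<close>) or in \<open>\<sigma> + \<tau>\<close> gives such an edge, and descent does the rest.
\<close>

lemma rtranclp_exists_crossing:
  assumes "r\<^sup>*\<^sup>* x y" "P x" "\<not> P y"
  shows "\<exists>a b. r\<^sup>*\<^sup>* x a \<and> r a b \<and> r\<^sup>*\<^sup>* b y \<and> P a \<and> \<not> P b"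
  using assms
proof (induction rule: rtranclp_induct)
  case base
  then show ?case by simp
next
  case (step y z)
  show ?case
  proof (cases "P y")
    case True
    then show ?thesis using step by blast
  next
    case False
    then obtain a b where "r\<^sup>*\<^sup>* x a" "r a b" "r\<^sup>*\<^sup>* b y" "P a" "\<not> P b"
      using step by blast
    then show ?thesis using step(2) by (meson rtranclp.rtrancl_into_rtrancl)
  qed
qed

section \<open>Coordinates with respect to the simple roots\<close>

locale reduced_root_basis =
  fixes \<Phi> \<Delta> :: "'a::euclidean_space set"
  assumes root_system: "root_system \<Phi>" and reduced: "rs_reduced \<Phi>" and basis: "rs_basis \<Phi> \<Delta>"
begin

abbreviation positive :: "'a \<Rightarrow> bool" where
  "positive x \<equiv> rless \<Delta> 0 x"

definition coord :: "'a \<Rightarrow> 'a \<Rightarrow> real" where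
  "coord x \<delta> = representation \<Delta> x \<delta>"

definition cartan :: "'a \<Rightarrow> 'a \<Rightarrow> real" where
  "cartan x \<gamma> = 2 * (x \<bullet> \<gamma>) / (\<gamma> \<bullet> \<gamma>)"

lemma finite_roots: "finite \<Phi>"
  and zero_notin_roots: "0 \<notin> \<Phi>"
  and span_roots: "span \<Phi> = UNIV"
  and rs_refl_root: "\<gamma> \<in> \<Phi> \<Longrightarrow> x \<in> \<Phi> \<Longrightarrow> rs_refl \<gamma> x \<in> \<Phi>"
  and cartan_Ints: "\<gamma> \<in> \<Phi> \<Longrightarrow> x \<in> \<Phi> \<Longrightarrow> cartan x \<gamma> \<in> \<int>"
  using root_system unfolding root_system_def cartan_def by auto

lemma simple_roots: "\<Delta> \<subseteq> \<Phi>"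
  and independent_simple: "independent \<Delta>"
  using basis unfolding rs_basis_def by auto

lemma finite_simple: "finite \<Delta>"
  using independent_simple finiteI_independent by auto

lemma root_nonzero: "\<gamma> \<in> \<Phi> \<Longrightarrow> \<gamma> \<noteq> 0"
  using zero_notin_roots by auto

lemma root_inner_self_pos: "\<gamma> \<in> \<Phi> \<Longrightarrow> \<gamma> \<bullet> \<gamma> > 0"
  using zero_notin_roots by auto

lemma uminus_root: "\<gamma> \<in> \<Phi> \<Longrightarrow> - \<gamma> \<in> \<Phi>"
proof -
  assume "\<gamma> \<in> \<Phi>"
  moreover from this have "rs_refl \<gamma> \<gamma> = - \<gamma>"
    using root_inner_self_pos by (simp add: rs_refl_def scaleR_2)
  ultimately show ?thesis using rs_refl_root by metis
qed

lemma root_integral_combination: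
  assumes "\<gamma> \<in> \<Phi>"
  obtains f :: "'a \<Rightarrow> int" where "\<gamma> = (\<Sum>\<delta>\<in>\<Delta>. of_int (f \<delta>) *\<^sub>R \<delta>)"
    "(\<forall>\<delta>\<in>\<Delta>. f \<delta> \<ge> 0) \<or> (\<forall>\<delta>\<in>\<Delta>. f \<delta> \<le> 0)"
  using basis assms unfolding rs_basis_def by blast

lemma span_simple: "span \<Delta> = UNIV"
proof -
  have "\<Phi> \<subseteq> span \<Delta>"
  proof
    fix \<gamma> assume "\<gamma> \<in> \<Phi>"
    then obtain f :: "'a \<Rightarrow> int" where "\<gamma> = (\<Sum>\<delta>\<in>\<Delta>. of_int (f \<delta>) *\<^sub>R \<delta>)"
      by (rule root_integral_combination)
    then show "\<gamma> \<in> span \<Delta>" by (simp add: span_sum span_scale span_base)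
  qed
  then show ?thesis using span_roots span_minimal by blast
qed

lemma in_span_simple [simp]: "x \<in> span \<Delta>"
  using span_simple by auto

lemma coord_add: "coord (x + y) d = coord x d + coord y d"
  and coord_diff: "coord (x - y) d = coord x d - coord y d"
  and coord_uminus: "coord (- x) d = - coord x d"
  and coord_scaleR: "coord (a *\<^sub>R x) d = a * coord x d"
  and coord_zero: "coord 0 d = 0"
  unfolding coord_def
  by (simp_all add: representation_add representation_diff representation_neg
      representation_scale representation_zero independent_simple)

lemma coord_simple: "e \<in> \<Delta> \<Longrightarrow> coord e d = (if d = e then 1 else 0)"
  unfolding coord_def by (simp add: representation_basis[OF independent_simple])

lemma coord_sum_simple:
  assumes "S \<subseteq> \<Delta>"
  shows "coord (\<Sum>\<delta>\<in>S. f \<delta> *\<^sub>R \<delta>) d = (if d \<in> S then f d else 0)"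
proof -
  have "finite S" using assms finite_simple finite_subset by auto
  have "coord (\<Sum>\<delta>\<in>S. f \<delta> *\<^sub>R \<delta>) d = (\<Sum>\<delta>\<in>S. f \<delta> * coord \<delta> d)"
    unfolding coord_def
    by (simp add: representation_sum representation_scale independent_simple)
  also have "\<dots> = (\<Sum>\<delta>\<in>S. if d = \<delta> then f \<delta> else 0)"
    using assms by (intro sum.cong) (auto simp: coord_simple)
  finally show ?thesis using \<open>finite S\<close> by simp
qed

lemma sum_coord: "(\<Sum>\<delta>\<in>\<Delta>. coord x \<delta> *\<^sub>R \<delta>) = x"
  unfolding coord_def using sum_representation_eq[OF independent_simple] finite_simple by simp

lemma eq_iff_coord: "x = y \<longleftrightarrow> (\<forall>d\<in>\<Delta>. coord x d = coord y d)"
  by (metis (no_types, lifting) sum_coord sum.cong)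

lemma inner_self_eq_sum_coord: "x \<bullet> x = (\<Sum>\<delta>\<in>\<Delta>. coord x \<delta> * (x \<bullet> \<delta>))"
  by (subst (2) sum_coord[symmetric]) (simp add: inner_sum_right)

lemma root_coord_Ints_sign:
  assumes "\<gamma> \<in> \<Phi>"
  shows "\<forall>d\<in>\<Delta>. coord \<gamma> d \<in> \<int>" "(\<forall>d\<in>\<Delta>. coord \<gamma> d \<ge> 0) \<or> (\<forall>d\<in>\<Delta>. coord \<gamma> d \<le> 0)"
proof -
  obtain f :: "'a \<Rightarrow> int" where f: "\<gamma> = (\<Sum>\<delta>\<in>\<Delta>. of_int (f \<delta>) *\<^sub>R \<delta>)"
    and sign: "(\<forall>\<delta>\<in>\<Delta>. f \<delta> \<ge> 0) \<or> (\<forall>\<delta>\<in>\<Delta>. f \<delta> \<le> 0)"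
    using assms by (rule root_integral_combination)
  have "d \<in> \<Delta> \<Longrightarrow> coord \<gamma> d = of_int (f d)" for d
    by (simp add: f coord_sum_simple)
  then show "\<forall>d\<in>\<Delta>. coord \<gamma> d \<in> \<int>" "(\<forall>d\<in>\<Delta>. coord \<gamma> d \<ge> 0) \<or> (\<forall>d\<in>\<Delta>. coord \<gamma> d \<le> 0)"
    using sign by auto
qed

lemma rle_iff_coord: "rle \<Delta> y x \<longleftrightarrow> (\<forall>d\<in>\<Delta>. coord y d \<le> coord x d)"
proof
  assume "rle \<Delta> y x"
  then obtain f where f: "\<forall>\<delta>\<in>\<Delta>. f \<delta> \<ge> 0" "x - y = (\<Sum>\<delta>\<in>\<Delta>. f \<delta> *\<^sub>R \<delta>)"
    unfolding rle_def by blast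
  have "d \<in> \<Delta> \<Longrightarrow> coord x d - coord y d = f d" for d
    using arg_cong[OF f(2), of "\<lambda>v. coord v d"] by (simp add: coord_diff coord_sum_simple)
  then show "\<forall>d\<in>\<Delta>. coord y d \<le> coord x d" using f(1) by force
next
  assume "\<forall>d\<in>\<Delta>. coord y d \<le> coord x d"
  moreover have "x - y = (\<Sum>\<delta>\<in>\<Delta>. (coord x \<delta> - coord y \<delta>) *\<^sub>R \<delta>)"
    by (subst sum_coord[of "x - y", symmetric]) (simp add: coord_diff)
  ultimately show "rle \<Delta> y x"
    unfolding rle_def by (intro exI[of _ "\<lambda>\<delta>. coord x \<delta> - coord y \<delta>"]) simp
qed

lemma rle_refl: "rle \<Delta> x x"
  by (simp add: rle_iff_coord)

lemma rle_trans: "rle \<Delta> x y \<Longrightarrow> rle \<Delta> y z \<Longrightarrow> rle \<Delta> x z"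
  unfolding rle_iff_coord by (meson order_trans)

lemma rle_antisym: "rle \<Delta> x y \<Longrightarrow> rle \<Delta> y x \<Longrightarrow> x = y"
  unfolding rle_iff_coord eq_iff_coord by (meson order_antisym)

lemma rle_uminus_iff: "rle \<Delta> (- x) (- y) \<longleftrightarrow> rle \<Delta> y x"
  unfolding rle_iff_coord by (simp add: coord_uminus)

lemma positive_iff_coord: "positive x \<longleftrightarrow> (\<forall>d\<in>\<Delta>. coord x d \<ge> 0) \<and> x \<noteq> 0"
  unfolding rless_def rle_iff_coord by (auto simp: coord_zero)

lemma positive_simple: "\<delta> \<in> \<Delta> \<Longrightarrow> positive \<delta>"
  using simple_roots zero_notin_roots by (auto simp: positive_iff_coord coord_simple)

lemma not_positive_uminus: "positive x \<Longrightarrow> \<not> positive (- x)"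
  unfolding positive_iff_coord eq_iff_coord by (auto simp: coord_uminus coord_zero intro: order_antisym)

lemma not_positive_root_coord:
  "\<gamma> \<in> \<Phi> \<Longrightarrow> \<not> positive \<gamma> \<Longrightarrow> \<forall>d\<in>\<Delta>. coord \<gamma> d \<le> 0"
  using root_coord_Ints_sign(2)[of \<gamma>] root_nonzero[of \<gamma>] unfolding positive_iff_coord by blast

lemma positive_uminus_root_iff: "\<gamma> \<in> \<Phi> \<Longrightarrow> positive (- \<gamma>) \<longleftrightarrow> \<not> positive \<gamma>"
  using not_positive_root_coord[of \<gamma>] not_positive_uminus[of "- \<gamma>"] root_nonzero[of \<gamma>]
  unfolding positive_iff_coord by (auto simp: coord_uminus)

lemma not_positive_if_rless_zero: "rless \<Delta> x 0 \<Longrightarrow> \<not> positive x"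
  unfolding rless_def using rle_antisym by blast

lemma positive_if_rle: "rle \<Delta> x y \<Longrightarrow> positive x \<Longrightarrow> y \<in> \<Phi> \<Longrightarrow> positive y"
  unfolding positive_iff_coord rle_iff_coord using zero_notin_roots by (meson order_trans)

lemma not_positive_if_rle:
  assumes "rle \<Delta> x y" "\<not> positive y" "x \<in> \<Phi>" "y \<in> \<Phi>"
  shows "\<not> positive x"
  using positive_if_rle[of "- y" "- x"] assms
  by (simp add: rle_uminus_iff positive_uminus_root_iff uminus_root)

lemma same_sign_if_between:
  assumes "rle \<Delta> \<alpha> \<gamma>" "rle \<Delta> \<gamma> \<beta>" "\<alpha> \<in> \<Phi>" "\<beta> \<in> \<Phi>" "\<gamma> \<in> \<Phi>"
    and "positive \<alpha> \<longleftrightarrow> positive \<beta>"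
  shows "positive \<gamma> \<longleftrightarrow> positive \<beta>"
  using positive_if_rle[OF assms(2) _ assms(4)] positive_if_rle[OF assms(1) _ assms(5)] assms(6)
  by blast

lemma simple_rle_positive_root_iff:
  assumes "\<gamma> \<in> \<Phi>" "positive \<gamma>" "\<delta> \<in> \<Delta>"
  shows "rle \<Delta> \<delta> \<gamma> \<longleftrightarrow> coord \<gamma> \<delta> \<noteq> 0"
proof
  assume "rle \<Delta> \<delta> \<gamma>"
  then show "coord \<gamma> \<delta> \<noteq> 0" using assms(3) unfolding rle_iff_coord by (force simp: coord_simple)
next
  assume "coord \<gamma> \<delta> \<noteq> 0"
  then have "coord \<gamma> \<delta> \<ge> 1"
    using root_coord_Ints_sign(1)[OF assms(1)] assms(2,3) Ints_nonzero_abs_ge1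
    unfolding positive_iff_coord by fastforce
  then show "rle \<Delta> \<delta> \<gamma>"
    using assms(2,3) unfolding rle_iff_coord positive_iff_coord by (auto simp: coord_simple)
qed

lemma rle_uminus_simple_iff:
  assumes "\<gamma> \<in> \<Phi>" "\<not> positive \<gamma>" "\<delta> \<in> \<Delta>"
  shows "rle \<Delta> \<gamma> (- \<delta>) \<longleftrightarrow> coord \<gamma> \<delta> \<noteq> 0"
  using simple_rle_positive_root_iff[of "- \<gamma>" \<delta>] rle_uminus_iff[of "- \<gamma>" \<delta>] assms
  by (simp add: uminus_root positive_uminus_root_iff coord_uminus)

lemma coord_ne_zero_iff_in_support:
  assumes "S \<subseteq> \<Delta>" "x = (\<Sum>\<sigma>\<in>S. of_int (n \<sigma>) *\<^sub>R \<sigma>)" "\<forall>\<sigma>\<in>S. n \<sigma> \<noteq> 0"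
  shows "coord x \<delta> \<noteq> 0 \<longleftrightarrow> \<delta> \<in> S"
  using assms by (simp add: coord_sum_simple)

section \<open>Reflections and Cartan integers\<close>

lemma rs_refl_eq: "rs_refl \<gamma> x = x - cartan x \<gamma> *\<^sub>R \<gamma>"
  unfolding rs_refl_def cartan_def by simp

lemma rs_refl_uminus: "rs_refl \<gamma> (- x) = - rs_refl \<gamma> x"
  unfolding rs_refl_def by (simp add: algebra_simps)

lemma rs_refl_self: "\<gamma> \<in> \<Phi> \<Longrightarrow> rs_refl \<gamma> \<gamma> = - \<gamma>"
  using root_inner_self_pos[of \<gamma>] by (simp add: rs_refl_def scaleR_2)

lemma inner_rs_refl: "\<gamma> \<noteq> 0 \<Longrightarrow> rs_refl \<gamma> x \<bullet> rs_refl \<gamma> y = x \<bullet> y"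
  unfolding rs_refl_def
  by (simp add: inner_diff_left inner_diff_right inner_commute field_simps)

lemma rs_refl_rs_refl: "\<gamma> \<noteq> 0 \<Longrightarrow> rs_refl \<gamma> (rs_refl \<gamma> x) = x"
proof -
  assume "\<gamma> \<noteq> 0"
  then have "rs_refl \<gamma> x \<bullet> \<gamma> = - (x \<bullet> \<gamma>)"
    unfolding rs_refl_def by (simp add: inner_diff_left)
  then show ?thesis unfolding rs_refl_def[of \<gamma> "rs_refl \<gamma> x"] by (simp add: rs_refl_def)
qed

lemma long_rs_refl: "long \<Phi> x \<Longrightarrow> \<gamma> \<in> \<Phi> \<Longrightarrow> long \<Phi> (rs_refl \<gamma> x)"
  using rs_refl_root inner_rs_refl[of \<gamma> x x] root_nonzero unfolding long_def by auto

lemma long_uminus: "long \<Phi> x \<Longrightarrow> long \<Phi> (- x)"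
  unfolding long_def using uminus_root by auto

lemma roots_inner_sq_less:
  assumes a: "a \<in> \<Phi>" and b: "b \<in> \<Phi>" and "b \<noteq> a" "b \<noteq> - a"
  shows "(a \<bullet> b)\<^sup>2 < (a \<bullet> a) * (b \<bullet> b)"
proof -
  have "\<bar>a \<bullet> b\<bar> \<noteq> norm a * norm b"
  proof
    assume "\<bar>a \<bullet> b\<bar> = norm a * norm b"
    then have "norm a *\<^sub>R b = norm b *\<^sub>R a \<or> norm a *\<^sub>R b = - norm b *\<^sub>R a"
      using norm_cauchy_schwarz_abs_eq by blast
    then have "b = (norm b / norm a) *\<^sub>R a \<or> - b = (norm b / norm a) *\<^sub>R a"
      using root_nonzero[OF a] by (auto simp: eq_vector_fraction_iff)
    then obtain t where t: "b = t *\<^sub>R a" by (metis minus_minus scaleR_minus_left)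
    then have "t = 1 \<or> t = -1" using reduced a b unfolding rs_reduced_def by blast
    then show False using t assms(3,4) by auto
  qed
  then have "\<bar>a \<bullet> b\<bar> < norm a * norm b"
    using Cauchy_Schwarz_ineq2[of a b] by linarith
  then have "\<bar>a \<bullet> b\<bar>\<^sup>2 < (norm a * norm b)\<^sup>2"
    by (intro power_strict_mono) auto
  then show ?thesis by (simp add: power_mult_distrib power2_norm_eq_inner)
qed

text \<open>Cauchy-Schwarz is strict for non-proportional roots, so the product of the two Cartan
  integers is less than \<open>4\<close>.\<close>
lemma cartan_shorter_root:
  assumes \<rho>: "\<rho> \<in> \<Phi>" and \<gamma>: "\<gamma> \<in> \<Phi>" and "\<rho> \<bullet> \<gamma> \<noteq> 0" "\<gamma> \<noteq> \<rho>" "\<gamma> \<noteq> - \<rho>"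
    and shorter: "\<gamma> \<bullet> \<gamma> \<le> \<rho> \<bullet> \<rho>"
  shows "\<bar>cartan \<gamma> \<rho>\<bar> = 1" "cartan \<rho> \<gamma> = cartan \<gamma> \<rho> * (\<rho> \<bullet> \<rho>) / (\<gamma> \<bullet> \<gamma>)"
    "\<bar>cartan \<rho> \<gamma>\<bar> \<le> 3"
proof -
  define A B t where "A = \<rho> \<bullet> \<rho>" "B = \<gamma> \<bullet> \<gamma>" "t = \<rho> \<bullet> \<gamma>"
  have A: "A > 0" and B: "B > 0" using root_inner_self_pos \<rho> \<gamma> A_B_t_def by auto
  have p: "cartan \<rho> \<gamma> = 2 * t / B" and q: "cartan \<gamma> \<rho> = 2 * t / A"
    unfolding cartan_def A_B_t_def by (simp_all add: inner_commute)
  have "t\<^sup>2 < A * B" using roots_inner_sq_less[OF \<rho> \<gamma> assms(4,5)] unfolding A_B_t_def .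
  then have prod: "\<bar>cartan \<rho> \<gamma>\<bar> * \<bar>cartan \<gamma> \<rho>\<bar> < 4"
    using A B by (simp add: p q abs_mult[symmetric] power2_eq_square divide_less_eq mult.commute)
  show ratio: "cartan \<rho> \<gamma> = cartan \<gamma> \<rho> * (\<rho> \<bullet> \<rho>) / (\<gamma> \<bullet> \<gamma>)"
    using A unfolding p q A_B_t_def[symmetric] by simp
  have "\<bar>cartan \<rho> \<gamma>\<bar> = \<bar>cartan \<gamma> \<rho>\<bar> * (A / B)" and "A / B \<ge> 1"
    using A B shorter by (simp_all add: ratio A_B_t_def abs_mult)
  then have ge: "\<bar>cartan \<rho> \<gamma>\<bar> \<ge> \<bar>cartan \<gamma> \<rho>\<bar>"
    using mult_left_mono[of 1 "A / B" "\<bar>cartan \<gamma> \<rho>\<bar>"] by simp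
  obtain i j where i: "cartan \<gamma> \<rho> = of_int i" and j: "cartan \<rho> \<gamma> = of_int j"
    using cartan_Ints[OF \<rho> \<gamma>] cartan_Ints[OF \<gamma> \<rho>] by (auto elim!: Ints_cases)
  have "i \<noteq> 0" using q i assms(3) A_B_t_def A by auto
  moreover have "\<bar>i\<bar> < 2"
  proof (rule ccontr)
    assume "\<not> \<bar>i\<bar> < 2"
    then have "\<bar>cartan \<gamma> \<rho>\<bar> \<ge> 2" using i by linarith
    then have "\<bar>cartan \<rho> \<gamma>\<bar> * \<bar>cartan \<gamma> \<rho>\<bar> \<ge> 2 * 2"
      using ge by (intro mult_mono) auto
    then show False using prod by simp
  qed
  ultimately show one: "\<bar>cartan \<gamma> \<rho>\<bar> = 1" using i by simp
  have "\<bar>j\<bar> < 4" using prod one j by simp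
  then show "\<bar>cartan \<rho> \<gamma>\<bar> \<le> 3" using j by simp
qed

lemma root_eq_pm_simple:
  assumes "\<gamma> \<in> \<Phi>" "\<delta> \<in> \<Delta>" "\<And>e. e \<in> \<Delta> \<Longrightarrow> e \<noteq> \<delta> \<Longrightarrow> coord \<gamma> e = 0"
  shows "\<gamma> = \<delta> \<or> \<gamma> = - \<delta>"
proof -
  have "\<gamma> = coord \<gamma> \<delta> *\<^sub>R \<delta>"
    by (subst eq_iff_coord) (use assms in \<open>auto simp: coord_scaleR coord_simple\<close>)
  moreover have "\<delta> \<in> \<Phi>" using assms simple_roots by auto
  ultimately have "coord \<gamma> \<delta> = 1 \<or> coord \<gamma> \<delta> = -1"
    using reduced assms(1) unfolding rs_reduced_def by metis
  with \<open>\<gamma> = coord \<gamma> \<delta> *\<^sub>R \<delta>\<close> show ?thesis by auto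
qed

lemma positive_root_rle_simple:
  assumes "\<gamma> \<in> \<Phi>" "positive \<gamma>" "rle \<Delta> \<gamma> \<delta>" "\<delta> \<in> \<Delta>"
  shows "\<gamma> = \<delta>"
proof -
  have "coord \<gamma> e = 0" if "e \<in> \<Delta>" "e \<noteq> \<delta>" for e
  proof -
    have "coord \<gamma> e \<le> coord \<delta> e" "0 \<le> coord \<gamma> e"
      using assms(2,3) that(1) unfolding rle_iff_coord positive_iff_coord by auto
    then show ?thesis using assms(4) that(2) by (simp add: coord_simple)
  qed
  then have "\<gamma> = \<delta> \<or> \<gamma> = - \<delta>" using root_eq_pm_simple assms(1,4) by blast
  then show ?thesis using assms(2) not_positive_uminus[OF positive_simple[OF assms(4)]] by auto
qed

lemma simple_inner_nonpos:
  assumes \<sigma>: "\<sigma> \<in> \<Delta>" and \<tau>: "\<tau> \<in> \<Delta>" and "\<sigma> \<noteq> \<tau>"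
  shows "\<sigma> \<bullet> \<tau> \<le> 0"
proof (rule ccontr)
  assume "\<not> \<sigma> \<bullet> \<tau> \<le> 0"
  then have "cartan \<sigma> \<tau> > 0"
    unfolding cartan_def using root_inner_self_pos simple_roots \<tau> by (simp add: subset_iff)
  moreover have "rs_refl \<tau> \<sigma> \<in> \<Phi>" using rs_refl_root simple_roots \<sigma> \<tau> by auto
  moreover have "coord (rs_refl \<tau> \<sigma>) \<sigma> = 1" "coord (rs_refl \<tau> \<sigma>) \<tau> = - cartan \<sigma> \<tau>"
    using assms by (auto simp: rs_refl_eq coord_diff coord_scaleR coord_simple)
  ultimately show False
    using root_coord_Ints_sign(2)[of "rs_refl \<tau> \<sigma>"] \<sigma> \<tau> by force
qed

lemma exists_simple_acute:
  assumes "positive x"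
  shows "\<exists>\<delta>\<in>\<Delta>. coord x \<delta> > 0 \<and> x \<bullet> \<delta> > 0"
proof (rule ccontr)
  assume "\<not> ?thesis"
  moreover have "\<forall>d\<in>\<Delta>. coord x d \<ge> 0" "x \<noteq> 0" using assms positive_iff_coord by auto
  ultimately have "\<forall>d\<in>\<Delta>. coord x d * (x \<bullet> d) \<le> 0"
    by (metis less_eq_real_def mult_nonneg_nonpos mult_zero_left not_le)
  then have "x \<bullet> x \<le> 0"
    unfolding inner_self_eq_sum_coord[of x] by (intro sum_nonpos) auto
  then show False using \<open>x \<noteq> 0\<close> inner_gt_zero_iff[of x] by linarith
qed

section \<open>Integrality of coroot coordinates\<close>

definition height :: "'a \<Rightarrow> real" where
  "height x = (\<Sum>\<delta>\<in>\<Delta>. coord x \<delta>)"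

lemma positive_weighted_sum_coord:
  assumes "positive x" "\<And>d. d \<in> \<Delta> \<Longrightarrow> f d > 0"
  shows "(\<Sum>d\<in>\<Delta>. f d * coord x d) > 0"
proof -
  have nonneg: "\<forall>d\<in>\<Delta>. 0 \<le> coord x d" and "x \<noteq> 0"
    using assms(1) positive_iff_coord by auto
  then obtain e where e: "e \<in> \<Delta>" "coord x e \<noteq> 0"
    using eq_iff_coord[of x 0] by (auto simp: coord_zero)
  have "(\<Sum>d\<in>{e}. f d * coord x d) \<le> (\<Sum>d\<in>\<Delta>. f d * coord x d)"
    using e nonneg assms(2) finite_simple by (intro sum_mono2) (auto simp: less_imp_le)
  moreover have "f e * coord x e > 0"
    using e nonneg assms(2)[OF e(1)] by (simp add: order_less_le)
  ultimately show ?thesis by simp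
qed

lemma height_pos: "positive x \<Longrightarrow> height x > 0"
  using positive_weighted_sum_coord[of x "\<lambda>_. 1"] unfolding height_def by simp

lemma rs_refl_simple_acute_positive:
  assumes \<gamma>: "\<gamma> \<in> \<Phi>" "positive \<gamma>" "\<gamma> \<notin> \<Delta>" and \<delta>: "\<delta> \<in> \<Delta>" "\<gamma> \<bullet> \<delta> > 0"
  shows "positive (rs_refl \<delta> \<gamma>)" "height (rs_refl \<delta> \<gamma>) \<le> height \<gamma> - 1"
proof -
  have \<delta>_root: "\<delta> \<in> \<Phi>" using \<delta>(1) simple_roots by auto
  have "cartan \<gamma> \<delta> \<in> \<int>" "cartan \<gamma> \<delta> > 0"
    using cartan_Ints[OF \<delta>_root \<gamma>(1)] \<delta>(2) root_inner_self_pos[OF \<delta>_root]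
    by (simp_all add: cartan_def)
  then have "cartan \<gamma> \<delta> \<ge> 1" by (auto elim!: Ints_cases)
  have coord_refl: "coord (rs_refl \<delta> \<gamma>) d = coord \<gamma> d - (if d = \<delta> then cartan \<gamma> \<delta> else 0)" for d
    using \<delta>(1) by (simp add: rs_refl_eq coord_diff coord_scaleR coord_simple)
  have nonneg: "\<forall>d\<in>\<Delta>. 0 \<le> coord \<gamma> d" using \<gamma>(2) positive_iff_coord by auto
  obtain f where f: "f \<in> \<Delta>" "f \<noteq> \<delta>" "coord \<gamma> f \<noteq> 0"
  proof (rule ccontr)
    assume "\<not> thesis"
    then have "\<gamma> = \<delta> \<or> \<gamma> = - \<delta>" using root_eq_pm_simple[OF \<gamma>(1) \<delta>(1)] that by blast
    then show False
      using \<gamma>(3) \<delta> root_inner_self_pos[OF \<delta>_root] by (auto simp del: inner_gt_zero_iff)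
  qed
  then have "coord (rs_refl \<delta> \<gamma>) f > 0" using nonneg coord_refl[of f] by (simp add: order_less_le)
  then show "positive (rs_refl \<delta> \<gamma>)"
    using root_coord_Ints_sign(2)[OF rs_refl_root[OF \<delta>_root \<gamma>(1)]] f(1)
      root_nonzero[OF rs_refl_root[OF \<delta>_root \<gamma>(1)]]
    unfolding positive_iff_coord by force
  show "height (rs_refl \<delta> \<gamma>) \<le> height \<gamma> - 1"
    using \<open>cartan \<gamma> \<delta> \<ge> 1\<close> \<delta>(1) finite_simple
    by (simp add: height_def coord_refl sum.distrib sum_subtractf)
qed

text \<open>\<open>coord \<gamma> e * (e \<bullet> e) / (\<gamma> \<bullet> \<gamma>)\<close> is the coordinate on the simple coroot of \<open>e\<close> of the
  coroot of \<open>\<gamma>\<close>; a simple reflection changes it by a Cartan integer.\<close>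
lemma coroot_coord_Ints_positive:
  assumes "\<gamma> \<in> \<Phi>" "positive \<gamma>" "height \<gamma> \<le> real n" "e \<in> \<Delta>"
  shows "coord \<gamma> e * (e \<bullet> e) / (\<gamma> \<bullet> \<gamma>) \<in> \<int>"
  using assms
proof (induction n arbitrary: \<gamma>)
  case 0
  then show ?case using height_pos by fastforce
next
  case (Suc n)
  show ?case
  proof (cases "\<gamma> \<in> \<Delta>")
    case True
    then show ?thesis using root_inner_self_pos[OF Suc.prems(1)] by (auto simp: coord_simple)
  next
    case False
    obtain \<delta> where \<delta>: "\<delta> \<in> \<Delta>" "\<gamma> \<bullet> \<delta> > 0" using exists_simple_acute[OF Suc.prems(2)] by blast
    have \<delta>_root: "\<delta> \<in> \<Phi>" using \<delta>(1) simple_roots by auto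
    define \<mu> where "\<mu> = rs_refl \<delta> \<gamma>"
    note \<mu> = rs_refl_simple_acute_positive[OF Suc.prems(1,2) False \<delta>, folded \<mu>_def]
    have "coord \<mu> e * (e \<bullet> e) / (\<mu> \<bullet> \<mu>) \<in> \<int>"
      using Suc.IH[OF _ \<mu>(1) _ Suc.prems(4)] \<mu>(2) Suc.prems(3) rs_refl_root[OF \<delta>_root Suc.prems(1)]
      unfolding \<mu>_def by simp
    moreover have "\<mu> \<bullet> \<mu> = \<gamma> \<bullet> \<gamma>"
      unfolding \<mu>_def using inner_rs_refl root_nonzero[OF \<delta>_root] by blast
    then have "coord \<gamma> e * (e \<bullet> e) / (\<gamma> \<bullet> \<gamma>)
        = coord \<mu> e * (e \<bullet> e) / (\<mu> \<bullet> \<mu>) + (if e = \<delta> then cartan \<delta> \<gamma> else 0)"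
      using root_inner_self_pos[OF Suc.prems(1)] \<delta>(1) unfolding \<mu>_def
      by (simp add: rs_refl_eq coord_diff coord_scaleR coord_simple cartan_def inner_commute
          field_simps)
    ultimately show ?thesis using cartan_Ints[OF Suc.prems(1) \<delta>_root] by auto
  qed
qed

lemma coroot_coord_Ints:
  assumes "\<gamma> \<in> \<Phi>" "e \<in> \<Delta>"
  shows "coord \<gamma> e * (e \<bullet> e) / (\<gamma> \<bullet> \<gamma>) \<in> \<int>"
proof (cases "positive \<gamma>")
  case True
  obtain n :: nat where "height \<gamma> \<le> real n" using real_arch_simple by blast
  then show ?thesis using coroot_coord_Ints_positive assms True by blast
next
  case False
  then have "positive (- \<gamma>)" using positive_uminus_root_iff[OF assms(1)] by simp
  moreover obtain n :: nat where "height (- \<gamma>) \<le> real n" using real_arch_simple by blast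
  ultimately have "coord (- \<gamma>) e * (e \<bullet> e) / (- \<gamma> \<bullet> - \<gamma>) \<in> \<int>"
    using coroot_coord_Ints_positive uminus_root assms by blast
  then show ?thesis by (metis Ints_minus coord_uminus divide_minus_left inner_minus_left
        inner_minus_right minus_minus mult_minus_left)
qed

end

section \<open>Root lengths in an irreducible root system\<close>

locale irreducible_root_basis = reduced_root_basis +
  assumes irreducible: "irreducible_rs \<Phi>"
begin

lemma roots_nonempty: "\<Phi> \<noteq> {}"
  using irreducible unfolding irreducible_rs_def by auto

lemma min_sq_le_inner_self: "\<gamma> \<in> \<Phi> \<Longrightarrow> min_sq \<Phi> \<le> \<gamma> \<bullet> \<gamma>"
  and inner_self_le_max_sq: "\<gamma> \<in> \<Phi> \<Longrightarrow> \<gamma> \<bullet> \<gamma> \<le> max_sq \<Phi>"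
  unfolding max_sq_def min_sq_def using finite_roots by auto

lemma exists_long: "\<exists>\<gamma>. long \<Phi> \<gamma>"
  and exists_shortest: "\<exists>\<gamma>\<in>\<Phi>. \<gamma> \<bullet> \<gamma> = min_sq \<Phi>"
proof -
  have "max_sq \<Phi> \<in> (\<lambda>\<gamma>. \<gamma> \<bullet> \<gamma>) ` \<Phi>" "min_sq \<Phi> \<in> (\<lambda>\<gamma>. \<gamma> \<bullet> \<gamma>) ` \<Phi>"
    unfolding max_sq_def min_sq_def using finite_roots roots_nonempty by auto
  then show "\<exists>\<gamma>. long \<Phi> \<gamma>" "\<exists>\<gamma>\<in>\<Phi>. \<gamma> \<bullet> \<gamma> = min_sq \<Phi>"
    unfolding long_def by auto
qed

lemma min_sq_pos: "min_sq \<Phi> > 0"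
  by (metis exists_shortest root_inner_self_pos)

lemma max_sq_pos: "max_sq \<Phi> > 0"
  by (metis exists_long root_inner_self_pos long_def)

text \<open>Roots not orthogonal to \<open>S\<close> lie in \<open>span S\<close>, so otherwise the roots would split into
  the ones in \<open>span S\<close> and the ones orthogonal to \<open>S\<close>.\<close>
lemma invariant_set_not_orthogonal:
  assumes S: "S \<subseteq> \<Phi>" "S \<noteq> {}" and invariant: "\<And>\<gamma> s. \<gamma> \<in> \<Phi> \<Longrightarrow> s \<in> S \<Longrightarrow> rs_refl \<gamma> s \<in> S"
    and \<rho>: "\<rho> \<in> \<Phi>"
  shows "\<exists>s\<in>S. \<rho> \<bullet> s \<noteq> 0"
proof -
  have in_span: "\<gamma> \<in> span S" if "\<gamma> \<in> \<Phi>" "s \<in> S" "\<gamma> \<bullet> s \<noteq> 0" for \<gamma> s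
  proof -
    have "cartan s \<gamma> \<noteq> 0"
      unfolding cartan_def using that root_inner_self_pos[of \<gamma>] by (simp add: inner_commute)
    then have "\<gamma> = (1 / cartan s \<gamma>) *\<^sub>R (s - rs_refl \<gamma> s)" by (simp add: rs_refl_eq)
    moreover have "s - rs_refl \<gamma> s \<in> span S"
      using that invariant by (intro span_diff span_base) auto
    ultimately show ?thesis by (metis span_scale)
  qed
  have "\<Phi> \<subseteq> span S"
  proof (rule ccontr)
    assume "\<not> \<Phi> \<subseteq> span S"
    moreover have "a \<bullet> b = 0" if "a \<in> \<Phi> \<inter> span S" "b \<in> \<Phi> - span S" for a b
    proof -
      have "orthogonal b s" if "s \<in> S" for s
        using in_span[of b s] \<open>b \<in> \<Phi> - span S\<close> that unfolding orthogonal_def by auto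
      then have "orthogonal b a" using \<open>a \<in> \<Phi> \<inter> span S\<close> orthogonal_to_span by blast
      then show ?thesis by (simp add: orthogonal_def inner_commute)
    qed
    moreover have "\<Phi> \<inter> span S \<noteq> {}" using S by (auto intro: span_base)
    ultimately have "\<exists>A B. A \<noteq> {} \<and> B \<noteq> {} \<and> A \<union> B = \<Phi> \<and> A \<inter> B = {} \<and>
        (\<forall>a\<in>A. \<forall>b\<in>B. a \<bullet> b = 0)"
      by (intro exI[of _ "\<Phi> \<inter> span S"] exI[of _ "\<Phi> - span S"]) auto
    then show False using irreducible unfolding irreducible_rs_def by blast
  qed
  show ?thesis
  proof (rule ccontr)
    assume "\<not> ?thesis"
    then have "orthogonal \<rho> \<rho>"
      using orthogonal_to_span \<open>\<Phi> \<subseteq> span S\<close> \<rho> unfolding orthogonal_def by blast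
    then show False using root_nonzero[OF \<rho>] by (simp add: orthogonal_def)
  qed
qed

lemma exists_not_orthogonal_same_length:
  assumes "\<sigma> \<in> \<Phi>" "\<rho> \<in> \<Phi>"
  shows "\<exists>s\<in>\<Phi>. s \<bullet> s = \<sigma> \<bullet> \<sigma> \<and> \<rho> \<bullet> s \<noteq> 0"
proof -
  have "\<exists>s\<in>{s\<in>\<Phi>. s \<bullet> s = \<sigma> \<bullet> \<sigma>}. \<rho> \<bullet> s \<noteq> 0"
  proof (rule invariant_set_not_orthogonal)
    show "rs_refl \<gamma> s \<in> {s\<in>\<Phi>. s \<bullet> s = \<sigma> \<bullet> \<sigma>}" if "\<gamma> \<in> \<Phi>" "s \<in> {s\<in>\<Phi>. s \<bullet> s = \<sigma> \<bullet> \<sigma>}" for \<gamma> s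
      using that rs_refl_root inner_rs_refl[of \<gamma> s s] root_nonzero[of \<gamma>] by auto
  qed (use assms in auto)
  then show ?thesis by auto
qed

lemma length_ratio_2_or_3:
  assumes \<rho>: "\<rho> \<in> \<Phi>" and \<gamma>: "\<gamma> \<in> \<Phi>" and "\<rho> \<bullet> \<gamma> \<noteq> 0" and shorter: "\<gamma> \<bullet> \<gamma> < \<rho> \<bullet> \<rho>"
  shows "(\<rho> \<bullet> \<rho>) / (\<gamma> \<bullet> \<gamma>) = 2 \<or> (\<rho> \<bullet> \<rho>) / (\<gamma> \<bullet> \<gamma>) = 3"
proof -
  have "\<gamma> \<noteq> \<rho>" "\<gamma> \<noteq> - \<rho>" using shorter by auto
  note cartan = cartan_shorter_root[OF \<rho> \<gamma> assms(3) this less_imp_le[OF shorter]]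
  have ratio: "\<bar>cartan \<rho> \<gamma>\<bar> = (\<rho> \<bullet> \<rho>) / (\<gamma> \<bullet> \<gamma>)"
    using cartan(1,2) root_inner_self_pos[OF \<gamma>] by (simp add: abs_mult abs_divide)
  obtain j where j: "cartan \<rho> \<gamma> = of_int j"
    using cartan_Ints[OF \<gamma> \<rho>] by (auto elim: Ints_cases)
  have "(\<rho> \<bullet> \<rho>) / (\<gamma> \<bullet> \<gamma>) > 1" using shorter root_inner_self_pos[OF \<gamma>] by simp
  then have "1 < \<bar>j\<bar>" "\<bar>j\<bar> \<le> 3" using ratio cartan(3) j by simp_all
  then have "\<bar>j\<bar> = 2 \<or> \<bar>j\<bar> = 3" by linarith
  then show ?thesis using ratio j by auto
qed

text \<open>A third length would give length ratios of at least \<open>2 * 2\<close> between the extreme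
  lengths, exceeding the bound \<open>3\<close>.\<close>
lemma root_length_cases: "\<gamma> \<in> \<Phi> \<Longrightarrow> \<gamma> \<bullet> \<gamma> = min_sq \<Phi> \<or> \<gamma> \<bullet> \<gamma> = max_sq \<Phi>"
proof (rule ccontr)
  assume \<gamma>: "\<gamma> \<in> \<Phi>" and "\<not> (\<gamma> \<bullet> \<gamma> = min_sq \<Phi> \<or> \<gamma> \<bullet> \<gamma> = max_sq \<Phi>)"
  then have lo: "min_sq \<Phi> < \<gamma> \<bullet> \<gamma>" and hi: "\<gamma> \<bullet> \<gamma> < max_sq \<Phi>"
    using min_sq_le_inner_self inner_self_le_max_sq by (auto simp: order_less_le)
  obtain a b where a: "long \<Phi> a" and b: "b \<in> \<Phi>" "b \<bullet> b = min_sq \<Phi>"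
    using exists_long exists_shortest by blast
  obtain a' where a': "a' \<in> \<Phi>" "a' \<bullet> a' = max_sq \<Phi>" "\<gamma> \<bullet> a' \<noteq> 0"
    using exists_not_orthogonal_same_length[of a \<gamma>] a \<gamma> unfolding long_def by auto
  obtain b' where b': "b' \<in> \<Phi>" "b' \<bullet> b' = min_sq \<Phi>" "\<gamma> \<bullet> b' \<noteq> 0"
    using exists_not_orthogonal_same_length[of b \<gamma>] b \<gamma> by auto
  obtain a'' where a'': "a'' \<in> \<Phi>" "a'' \<bullet> a'' = max_sq \<Phi>" "b \<bullet> a'' \<noteq> 0"
    using exists_not_orthogonal_same_length[of a b] a b unfolding long_def by auto
  have "max_sq \<Phi> / (\<gamma> \<bullet> \<gamma>) \<ge> 2"
    using length_ratio_2_or_3[OF a'(1) \<gamma>] a' hi by (auto simp: inner_commute)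
  moreover have "(\<gamma> \<bullet> \<gamma>) / min_sq \<Phi> \<ge> 2"
    using length_ratio_2_or_3[OF \<gamma> b'(1)] b' lo by auto
  ultimately have "2 * 2 \<le> (max_sq \<Phi> / (\<gamma> \<bullet> \<gamma>)) * ((\<gamma> \<bullet> \<gamma>) / min_sq \<Phi>)"
    by (intro mult_mono) auto
  moreover have "max_sq \<Phi> / min_sq \<Phi> \<le> 3"
    using length_ratio_2_or_3[OF a''(1) b(1)] a'' b lo hi by (auto simp: inner_commute)
  moreover have "max_sq \<Phi> / min_sq \<Phi> = (max_sq \<Phi> / (\<gamma> \<bullet> \<gamma>)) * ((\<gamma> \<bullet> \<gamma>) / min_sq \<Phi>)"
    using lo min_sq_pos root_nonzero[OF \<gamma>] by simp
  ultimately show False by linarith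
qed

section \<open>Dual height and level\<close>

definition weight :: "'a \<Rightarrow> real" where
  "weight \<delta> = (\<delta> \<bullet> \<delta>) / max_sq \<Phi>"

lemma weight_pos: "\<delta> \<in> \<Delta> \<Longrightarrow> weight \<delta> > 0"
  unfolding weight_def using root_inner_self_pos max_sq_pos simple_roots by auto

lemma weight_long: "long \<Phi> \<delta> \<Longrightarrow> weight \<delta> = 1"
  unfolding weight_def long_def using max_sq_pos by simp

text \<open>Only two root lengths occur, so the factor \<open>1 / rr \<Phi>\<close> of short simple roots in
  \<open>htv\<close> is their weight.\<close>
lemma htv_eq_weighted_sum: "htv \<Phi> \<Delta> x = (\<Sum>\<delta>\<in>\<Delta>. weight \<delta> * coord x \<delta>)"
  unfolding htv_def coord_def
proof (rule sum.cong)
  fix \<delta> assume "\<delta> \<in> \<Delta>"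
  then have "\<delta> \<in> \<Phi>" using simple_roots by auto
  then have "(if long \<Phi> \<delta> then 1 else 1 / rr \<Phi>) = weight \<delta>"
    using root_length_cases[of \<delta>] max_sq_pos unfolding weight_def long_def rr_def by auto
  then show "(if long \<Phi> \<delta> then 1 else 1 / rr \<Phi>) * representation \<Delta> x \<delta>
      = weight \<delta> * representation \<Delta> x \<delta>" by simp
qed simp

lemma htv_diff: "htv \<Phi> \<Delta> (x - y) = htv \<Phi> \<Delta> x - htv \<Phi> \<Delta> y"
  unfolding htv_eq_weighted_sum by (simp add: coord_diff right_diff_distrib sum_subtractf)

lemma htv_scaleR: "htv \<Phi> \<Delta> (a *\<^sub>R x) = a * htv \<Phi> \<Delta> x"
  unfolding htv_eq_weighted_sum by (simp add: coord_scaleR sum_distrib_left mult.left_commute)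

lemma htv_uminus: "htv \<Phi> \<Delta> (- x) = - htv \<Phi> \<Delta> x"
  unfolding htv_eq_weighted_sum by (simp add: coord_uminus sum_negf)

lemma htv_simple: "\<delta> \<in> \<Delta> \<Longrightarrow> htv \<Phi> \<Delta> \<delta> = weight \<delta>"
  unfolding htv_eq_weighted_sum using finite_simple
  by (simp add: coord_simple if_distrib sum.delta cong: if_cong)

lemma htv_pos: "positive x \<Longrightarrow> htv \<Phi> \<Delta> x > 0"
  unfolding htv_eq_weighted_sum by (rule positive_weighted_sum_coord) (auto simp: weight_pos)

lemma htv_mono: "rle \<Delta> x y \<Longrightarrow> htv \<Phi> \<Delta> x \<le> htv \<Phi> \<Delta> y"
  unfolding htv_eq_weighted_sum rle_iff_coord
  by (intro sum_mono mult_left_mono) (auto simp: weight_pos less_imp_le)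

lemma rle_htv_eq_imp_eq:
  assumes "rle \<Delta> x y" "htv \<Phi> \<Delta> x = htv \<Phi> \<Delta> y"
  shows "x = y"
proof -
  have nonneg: "\<forall>d\<in>\<Delta>. 0 \<le> weight d * (coord y d - coord x d)"
    using assms(1) weight_pos unfolding rle_iff_coord by (simp add: less_imp_le)
  have "(\<Sum>d\<in>\<Delta>. weight d * (coord y d - coord x d)) = 0"
    using assms(2) unfolding htv_eq_weighted_sum by (simp add: right_diff_distrib sum_subtractf)
  then have "\<forall>d\<in>\<Delta>. weight d * (coord y d - coord x d) = 0"
    using sum_nonneg_eq_0_iff[OF finite_simple, of "\<lambda>d. weight d * (coord y d - coord x d)"] nonneg
    by simp
  then have "coord x d = coord y d" if "d \<in> \<Delta>" for d
    using that weight_pos[OF that] by auto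
  then show ?thesis by (subst eq_iff_coord) blast
qed

lemma weight_coord_long_Ints: "long \<Phi> x \<Longrightarrow> \<delta> \<in> \<Delta> \<Longrightarrow> weight \<delta> * coord x \<delta> \<in> \<int>"
  using coroot_coord_Ints[of x \<delta>] unfolding long_def weight_def by (simp add: mult.commute)

lemma htv_long_Ints: "long \<Phi> x \<Longrightarrow> htv \<Phi> \<Delta> x \<in> \<int>"
  unfolding htv_eq_weighted_sum using weight_coord_long_Ints by (intro Ints_sum) auto

lemma htv_long_ge_1: "long \<Phi> x \<Longrightarrow> positive x \<Longrightarrow> htv \<Phi> \<Delta> x \<ge> 1"
  using htv_long_Ints[of x] htv_pos[of x] Ints_nonzero_abs_ge1[of "htv \<Phi> \<Delta> x"] by simp

text \<open>Each simple root contributes an integer \<open>\<ge> 1\<close> to the dual height of a long root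
  whose coordinate on it is positive.\<close>
lemma long_simple_if_htv_le_1:
  assumes long: "long \<Phi> x" and "positive x" and "htv \<Phi> \<Delta> x \<le> 1"
  shows "x \<in> \<Delta>"
proof -
  have x: "x \<in> \<Phi>" using long long_def by auto
  have nonneg: "\<forall>d\<in>\<Delta>. 0 \<le> weight d * coord x d"
    using \<open>positive x\<close> weight_pos positive_iff_coord by (simp add: less_imp_le)
  obtain e where e: "e \<in> \<Delta>" "coord x e > 0"
    using exists_simple_acute[OF \<open>positive x\<close>] by blast
  have "weight e * coord x e \<ge> 1"
    using weight_coord_long_Ints[OF long e(1)] weight_pos[OF e(1)] e(2)
      Ints_nonzero_abs_ge1[of "weight e * coord x e"] by simp
  moreover have "htv \<Phi> \<Delta> x = weight e * coord x e + (\<Sum>d\<in>\<Delta> - {e}. weight d * coord x d)"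
    unfolding htv_eq_weighted_sum using finite_simple e(1) by (simp add: sum.remove)
  moreover have "(\<Sum>d\<in>\<Delta> - {e}. weight d * coord x d) \<ge> 0"
    using nonneg by (intro sum_nonneg) auto
  ultimately have "(\<Sum>d\<in>\<Delta> - {e}. weight d * coord x d) = 0"
    using assms(3) by linarith
  then have "\<forall>d\<in>\<Delta> - {e}. weight d * coord x d = 0"
    using sum_nonneg_eq_0_iff[of "\<Delta> - {e}" "\<lambda>d. weight d * coord x d"] finite_simple nonneg
    by simp
  then have "coord x d = 0" if "d \<in> \<Delta>" "d \<noteq> e" for d
    using that weight_pos[of d] by force
  then have "x = e \<or> x = - e" using root_eq_pm_simple[OF x e(1)] by blast
  then show ?thesis using e by (auto simp: coord_uminus coord_simple)
qed

lemma level_succ_iff: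
  "level \<Phi> \<Delta> y = level \<Phi> \<Delta> x + 1 \<longleftrightarrow>
     htv \<Phi> \<Delta> x - htv \<Phi> \<Delta> y = 1 + (if positive y then 0 else 1) - (if positive x then 0 else 1)"
  unfolding level_def by auto

section \<open>Edges and paths\<close>

lemma edge_reflects_down:
  assumes "edge \<Phi> \<Delta> x \<gamma> y"
  shows "cartan x \<gamma> > 0" "y = x - cartan x \<gamma> *\<^sub>R \<gamma>" "rle \<Delta> y x"
proof -
  have \<gamma>: "positive \<gamma>" and y: "y = x - cartan x \<gamma> *\<^sub>R \<gamma>"
    and level: "level \<Phi> \<Delta> y = level \<Phi> \<Delta> x + 1"
    using assms rs_refl_eq unfolding edge_def positive_root_def by auto
  have "htv \<Phi> \<Delta> x - htv \<Phi> \<Delta> y = cartan x \<gamma> * htv \<Phi> \<Delta> \<gamma>"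
    unfolding y by (simp add: htv_diff htv_scaleR)
  then have step: "cartan x \<gamma> * htv \<Phi> \<Delta> \<gamma>
      = 1 + (if positive y then 0 else 1) - (if positive x then 0 else 1)"
    using level unfolding level_succ_iff by simp
  show "cartan x \<gamma> > 0"
  proof (rule ccontr)
    assume "\<not> cartan x \<gamma> > 0"
    then have "cartan x \<gamma> * htv \<Phi> \<Delta> \<gamma> \<le> 0"
      using htv_pos[OF \<gamma>] by (simp add: mult_nonpos_nonneg)
    then have "\<not> positive x" "positive y" "cartan x \<gamma> = 0"
      using step htv_pos[OF \<gamma>] by (auto split: if_splits)
    then show False using y by simp
  qed
  with \<gamma> show "rle \<Delta> y x"
    unfolding y rle_iff_coord positive_iff_coord by (auto simp: coord_diff coord_scaleR)
  show "y = x - cartan x \<gamma> *\<^sub>R \<gamma>" by (fact y)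
qed

lemma edge_uminus:
  assumes "edge \<Phi> \<Delta> x \<gamma> y"
  shows "edge \<Phi> \<Delta> (- y) \<gamma> (- x)"
proof -
  have x: "x \<in> \<Phi>" and y: "y \<in> \<Phi>" and \<gamma>: "\<gamma> \<in> \<Phi>"
    using assms unfolding edge_def long_def positive_root_def by auto
  have "rs_refl \<gamma> (- y) = - x"
    using assms rs_refl_rs_refl[OF root_nonzero[OF \<gamma>]] unfolding edge_def by (simp add: rs_refl_uminus)
  then show ?thesis
    using assms long_uminus positive_uminus_root_iff[OF x] positive_uminus_root_iff[OF y]
    unfolding edge_def level_succ_iff by (auto simp: htv_uminus)
qed

definition edge_by :: "'a set \<Rightarrow> 'a \<Rightarrow> 'a \<Rightarrow> bool" where
  "edge_by G x y \<longleftrightarrow> (\<exists>\<gamma>\<in>G. edge \<Phi> \<Delta> x \<gamma> y)"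

lemma path_in_imp_rtranclp:
  assumes "path_in \<Phi> \<Delta> G x y"
  shows "(edge_by G)\<^sup>*\<^sup>* x y"
proof -
  obtain bs gs where p: "length bs = Suc (length gs)" "bs ! 0 = x" "bs ! length gs = y"
    "set gs \<subseteq> G" "\<forall>i < length gs. edge \<Phi> \<Delta> (bs ! i) (gs ! i) (bs ! Suc i)"
    using assms unfolding path_in_def by blast
  have "(edge_by G)\<^sup>*\<^sup>* x (bs ! i)" if "i \<le> length gs" for i
    using that
  proof (induction i)
    case (Suc i)
    then have "i < length gs" by simp
    then have "edge_by G (bs ! i) (bs ! Suc i)"
      unfolding edge_by_def using p(4,5) nth_mem[of i gs] by blast
    with Suc show ?case by (meson Suc_leD rtranclp.rtrancl_into_rtrancl)
  qed (simp add: p(2))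
  then show ?thesis using p(3) by auto
qed

lemma rtranclp_imp_path_in:
  assumes "(edge_by G)\<^sup>*\<^sup>* x y" "long \<Phi> x"
  shows "path_in \<Phi> \<Delta> G x y"
  using assms
proof (induction rule: rtranclp_induct)
  case base
  then show ?case unfolding path_in_def by (intro exI[of _ "[x]"] exI[of _ "[]"]) auto
next
  case (step y z)
  then obtain bs gs where p: "length bs = Suc (length gs)" "bs ! 0 = x" "bs ! length gs = y"
    "\<forall>i \<le> length gs. long \<Phi> (bs ! i)" "set gs \<subseteq> G"
    "\<forall>i < length gs. edge \<Phi> \<Delta> (bs ! i) (gs ! i) (bs ! Suc i)"
    unfolding path_in_def by blast
  obtain \<gamma> where \<gamma>: "\<gamma> \<in> G" "edge \<Phi> \<Delta> y \<gamma> z" using step(2) unfolding edge_by_def by blast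
  have "\<forall>i < Suc (length gs). edge \<Phi> \<Delta> ((bs @ [z]) ! i) ((gs @ [\<gamma>]) ! i) ((bs @ [z]) ! Suc i)"
    using p \<gamma> by (auto simp: nth_append less_Suc_eq)
  moreover have "\<forall>i \<le> Suc (length gs). long \<Phi> ((bs @ [z]) ! i)"
    using p \<gamma> unfolding edge_def by (auto simp: nth_append le_Suc_eq)
  ultimately show ?case
    unfolding path_in_def using p \<gamma>
    by (intro exI[of _ "bs @ [z]"] exI[of _ "gs @ [\<gamma>]"]) (auto simp: nth_append)
qed

lemma path_in_iff_rtranclp: "path_in \<Phi> \<Delta> G x y \<longleftrightarrow> long \<Phi> x \<and> (edge_by G)\<^sup>*\<^sup>* x y"
  using path_in_imp_rtranclp rtranclp_imp_path_in unfolding path_in_def by blast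

lemma rtranclp_edge_by_mono:
  assumes "G \<subseteq> G'" "(edge_by G)\<^sup>*\<^sup>* x y"
  shows "(edge_by G')\<^sup>*\<^sup>* x y"
proof -
  have "edge_by G \<le> edge_by G'" using assms(1) unfolding edge_by_def by blast
  then show ?thesis using assms(2) rtranclp_mono by (metis predicate2D)
qed

lemma rtranclp_edge_by_rle: "(edge_by G)\<^sup>*\<^sup>* x y \<Longrightarrow> rle \<Delta> y x"
  by (induction rule: rtranclp_induct)
    (auto simp: edge_by_def rle_refl intro: rle_trans dest: edge_reflects_down(3))

section \<open>Descent between roots of the same sign\<close>

text \<open>A long root meets a shorter-or-equal root with Cartan integer \<open>1\<close>, so the reflection
  subtracts exactly \<open>|x|\<^sup>2 / |\<delta>|\<^sup>2 = 1 / weight \<delta>\<close> copies of \<open>\<delta>\<close>.\<close>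
lemma rs_refl_simple_acute_long:
  assumes x: "long \<Phi> x" and \<delta>: "\<delta> \<in> \<Delta>" "x \<bullet> \<delta> > 0" "x \<noteq> \<delta>"
  shows "rs_refl \<delta> x = x - (1 / weight \<delta>) *\<^sub>R \<delta>"
proof -
  have x_root: "x \<in> \<Phi>" and xx: "x \<bullet> x = max_sq \<Phi>" using x unfolding long_def by auto
  have \<delta>_root: "\<delta> \<in> \<Phi>" using \<delta>(1) simple_roots by auto
  have "\<delta> \<noteq> - x" using \<delta>(2) root_inner_self_pos[OF x_root] by (auto simp del: inner_gt_zero_iff)
  note cartan = cartan_shorter_root[OF x_root \<delta>_root _ \<delta>(3)[symmetric] this]
  have "cartan \<delta> x > 0"
    unfolding cartan_def using \<delta>(2) root_inner_self_pos[OF x_root] by (simp add: inner_commute)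
  then have "cartan \<delta> x = 1"
    using cartan(1) \<delta>(2) inner_self_le_max_sq[OF \<delta>_root] xx by auto
  then have "cartan x \<delta> = 1 / weight \<delta>"
    using cartan(2) \<delta>(2) inner_self_le_max_sq[OF \<delta>_root] xx unfolding weight_def by simp
  then show ?thesis by (simp add: rs_refl_eq)
qed

lemma coord_gap_long:
  assumes "long \<Phi> \<alpha>" "long \<Phi> \<beta>" "\<delta> \<in> \<Delta>" "coord \<alpha> \<delta> < coord \<beta> \<delta>"
  shows "coord \<alpha> \<delta> + 1 / weight \<delta> \<le> coord \<beta> \<delta>"
proof -
  have w: "weight \<delta> > 0" using weight_pos[OF assms(3)] .
  have "weight \<delta> * coord \<beta> \<delta> - weight \<delta> * coord \<alpha> \<delta> \<in> \<int>"
    using weight_coord_long_Ints[OF assms(2,3)] weight_coord_long_Ints[OF assms(1,3)] by auto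
  moreover have "weight \<delta> * coord \<beta> \<delta> - weight \<delta> * coord \<alpha> \<delta> > 0"
    using assms(4) w by (simp add: right_diff_distrib[symmetric])
  ultimately have "weight \<delta> * (coord \<beta> \<delta> - coord \<alpha> \<delta>) \<ge> 1"
    using Ints_nonzero_abs_ge1 by (fastforce simp: right_diff_distrib)
  then show ?thesis using w by (simp add: field_simps)
qed

lemma edge_simple_above:
  assumes \<alpha>: "long \<Phi> \<alpha>" and \<beta>: "long \<Phi> \<beta>" and le: "rle \<Delta> \<alpha> \<beta>"
    and sign: "positive \<alpha> \<longleftrightarrow> positive \<beta>"
    and \<delta>: "\<delta> \<in> \<Delta>" "coord \<alpha> \<delta> < coord \<beta> \<delta>" "\<beta> \<bullet> \<delta> > 0"
  shows "edge \<Phi> \<Delta> \<beta> \<delta> (rs_refl \<delta> \<beta>)" "rle \<Delta> \<alpha> (rs_refl \<delta> \<beta>)"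
    "htv \<Phi> \<Delta> (rs_refl \<delta> \<beta>) = htv \<Phi> \<Delta> \<beta> - 1"
    "positive (rs_refl \<delta> \<beta>) \<longleftrightarrow> positive \<beta>"
proof -
  define \<beta>' where "\<beta>' = rs_refl \<delta> \<beta>"
  have roots: "\<alpha> \<in> \<Phi>" "\<beta> \<in> \<Phi>" "\<delta> \<in> \<Phi>" using \<alpha> \<beta> \<delta>(1) simple_roots unfolding long_def by auto
  have "\<beta> \<noteq> \<delta>"
  proof
    assume "\<beta> = \<delta>"
    then have "\<alpha> = \<delta>"
      using positive_root_rle_simple[OF roots(1) _ _ \<delta>(1)] positive_simple[OF \<delta>(1)] sign le
      by auto
    with \<open>\<beta> = \<delta>\<close> \<delta>(2) show False by simp
  qed
  then have \<beta>': "\<beta>' = \<beta> - (1 / weight \<delta>) *\<^sub>R \<delta>"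
    unfolding \<beta>'_def using rs_refl_simple_acute_long \<beta> \<delta> by blast
  have coord_\<beta>': "coord \<beta>' e = coord \<beta> e - (if e = \<delta> then 1 / weight \<delta> else 0)" for e
    unfolding \<beta>' using \<delta>(1) by (simp add: coord_diff coord_scaleR coord_simple)
  show below: "rle \<Delta> \<alpha> \<beta>'"
    using le coord_gap_long[OF \<alpha> \<beta> \<delta>(1,2)] unfolding rle_iff_coord coord_\<beta>' by auto
  have "rle \<Delta> \<beta>' \<beta>" using weight_pos[OF \<delta>(1)] unfolding rle_iff_coord coord_\<beta>' by auto
  then show same_sign: "positive \<beta>' \<longleftrightarrow> positive \<beta>"
    using same_sign_if_between[OF below] roots sign rs_refl_root \<beta>'_def by blast
  show htv: "htv \<Phi> \<Delta> \<beta>' = htv \<Phi> \<Delta> \<beta> - 1"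
    unfolding \<beta>' using weight_pos[OF \<delta>(1)] \<delta>(1) by (simp add: htv_diff htv_scaleR htv_simple)
  show "edge \<Phi> \<Delta> \<beta> \<delta> \<beta>'"
    unfolding edge_def positive_root_def level_succ_iff
    using \<beta> long_rs_refl[OF \<beta> roots(3)] roots(3) positive_simple[OF \<delta>(1)] same_sign htv \<beta>'_def
    by simp
qed

text \<open>The mirror image of the previous step under \<open>x \<mapsto> -x\<close>, which reverses both \<open>\<le>\<close>
  and edges.\<close>
lemma edge_simple_below:
  assumes \<alpha>: "long \<Phi> \<alpha>" and \<beta>: "long \<Phi> \<beta>" and le: "rle \<Delta> \<alpha> \<beta>"
    and sign: "positive \<alpha> \<longleftrightarrow> positive \<beta>"
    and \<delta>: "\<delta> \<in> \<Delta>" "coord \<alpha> \<delta> < coord \<beta> \<delta>" "\<alpha> \<bullet> \<delta> < 0"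
  shows "edge \<Phi> \<Delta> (rs_refl \<delta> \<alpha>) \<delta> \<alpha>" "rle \<Delta> (rs_refl \<delta> \<alpha>) \<beta>"
    "htv \<Phi> \<Delta> (rs_refl \<delta> \<alpha>) = htv \<Phi> \<Delta> \<alpha> + 1"
    "positive (rs_refl \<delta> \<alpha>) \<longleftrightarrow> positive \<alpha>"
proof -
  have roots: "\<alpha> \<in> \<Phi>" "\<beta> \<in> \<Phi>" "rs_refl \<delta> \<alpha> \<in> \<Phi>"
    using \<alpha> \<beta> \<delta>(1) simple_roots rs_refl_root unfolding long_def by auto
  have "positive (- \<beta>) \<longleftrightarrow> positive (- \<alpha>)"
    using sign positive_uminus_root_iff roots by blast
  moreover have "rle \<Delta> (- \<beta>) (- \<alpha>)" using le by (simp add: rle_uminus_iff)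
  moreover have "coord (- \<beta>) \<delta> < coord (- \<alpha>) \<delta>" using \<delta>(2) by (simp add: coord_uminus)
  moreover have "(- \<alpha>) \<bullet> \<delta> > 0" using \<delta>(3) by simp
  ultimately have "edge \<Phi> \<Delta> (- \<alpha>) \<delta> (- rs_refl \<delta> \<alpha>)" "rle \<Delta> (- \<beta>) (- rs_refl \<delta> \<alpha>)"
    "htv \<Phi> \<Delta> (- rs_refl \<delta> \<alpha>) = htv \<Phi> \<Delta> (- \<alpha>) - 1"
    "positive (- rs_refl \<delta> \<alpha>) \<longleftrightarrow> positive (- \<alpha>)"
    using edge_simple_above[OF long_uminus[OF \<beta>] long_uminus[OF \<alpha>] _ _ \<delta>(1)]
    by (simp_all add: rs_refl_uminus)
  then show "edge \<Phi> \<Delta> (rs_refl \<delta> \<alpha>) \<delta> \<alpha>" "rle \<Delta> (rs_refl \<delta> \<alpha>) \<beta>"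
    "htv \<Phi> \<Delta> (rs_refl \<delta> \<alpha>) = htv \<Phi> \<Delta> \<alpha> + 1"
    "positive (rs_refl \<delta> \<alpha>) \<longleftrightarrow> positive \<alpha>"
    using edge_uminus[of "- \<alpha>" \<delta> "- rs_refl \<delta> \<alpha>"] positive_uminus_root_iff roots
    by (auto simp: rle_uminus_iff htv_uminus)
qed

lemma simple_edges_if_same_sign:
  assumes "long \<Phi> \<alpha>" "long \<Phi> \<beta>" "rle \<Delta> \<alpha> \<beta>" "positive \<alpha> \<longleftrightarrow> positive \<beta>"
  shows "(edge_by \<Delta>)\<^sup>*\<^sup>* \<beta> \<alpha>"
proof -
  have "htv \<Phi> \<Delta> \<beta> - htv \<Phi> \<Delta> \<alpha> \<in> \<nat>"
    using htv_long_Ints[OF assms(1)] htv_long_Ints[OF assms(2)] htv_mono[OF assms(3)]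
    unfolding Nats_altdef2 by simp
  then obtain n where "htv \<Phi> \<Delta> \<beta> - htv \<Phi> \<Delta> \<alpha> = of_nat n" by (auto elim: Nats_cases)
  with assms show ?thesis
  proof (induction n arbitrary: \<alpha> \<beta>)
    case 0
    then show ?case using rle_htv_eq_imp_eq[OF "0.prems"(3)] by simp
  next
    case (Suc n)
    have "positive (\<beta> - \<alpha>)"
      using Suc.prems(3,5) unfolding positive_iff_coord rle_iff_coord by (auto simp: coord_diff)
    then obtain \<delta> where \<delta>: "\<delta> \<in> \<Delta>" "coord (\<beta> - \<alpha>) \<delta> > 0" "(\<beta> - \<alpha>) \<bullet> \<delta> > 0"
      using exists_simple_acute by blast
    have \<delta>_root: "\<delta> \<in> \<Phi>" using \<delta>(1) simple_roots by auto
    have lt: "coord \<alpha> \<delta> < coord \<beta> \<delta>" using \<delta>(2) by (simp add: coord_diff)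
    consider "\<beta> \<bullet> \<delta> > 0" | "\<alpha> \<bullet> \<delta> < 0" using \<delta>(3) by (simp add: inner_diff_left) linarith
    then show ?case
    proof cases
      case 1
      note step = edge_simple_above[OF Suc.prems(1-4) \<delta>(1) lt 1]
      have "(edge_by \<Delta>)\<^sup>*\<^sup>* (rs_refl \<delta> \<beta>) \<alpha>"
        using Suc.IH[OF Suc.prems(1) long_rs_refl[OF Suc.prems(2) \<delta>_root] step(2)]
          step(3,4) Suc.prems(4,5) by simp
      moreover have "edge_by \<Delta> \<beta> (rs_refl \<delta> \<beta>)" using step(1) \<delta>(1) unfolding edge_by_def by blast
      ultimately show ?thesis by (meson converse_rtranclp_into_rtranclp)
    next
      case 2
      note step = edge_simple_below[OF Suc.prems(1-4) \<delta>(1) lt 2]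
      have "(edge_by \<Delta>)\<^sup>*\<^sup>* \<beta> (rs_refl \<delta> \<alpha>)"
        using Suc.IH[OF long_rs_refl[OF Suc.prems(1) \<delta>_root] Suc.prems(2) step(2)]
          step(3,4) Suc.prems(4,5) by simp
      moreover have "edge_by \<Delta> (rs_refl \<delta> \<alpha>) \<alpha>" using step(1) \<delta>(1) unfolding edge_by_def by blast
      ultimately show ?thesis by (meson rtranclp.rtrancl_into_rtrancl)
    qed
  qed
qed

section \<open>Paths from positive to negative roots\<close>

text \<open>Both ends have dual height at least \<open>1\<close> in absolute value, and the edge lowers the
  dual height by \<open>2\<close>.\<close>
lemma edge_across_zero_simple:
  assumes edge: "edge \<Phi> \<Delta> x \<gamma> y" and "positive x" "\<not> positive y"
  shows "x \<in> \<Delta>" "- y \<in> \<Delta>"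
proof -
  have x: "long \<Phi> x" and y: "long \<Phi> (- y)" and level: "level \<Phi> \<Delta> y = level \<Phi> \<Delta> x + 1"
    using edge long_uminus unfolding edge_def by auto
  have "positive (- y)" using y assms(3) positive_uminus_root_iff unfolding long_def by force
  have "htv \<Phi> \<Delta> x + htv \<Phi> \<Delta> (- y) = 2"
    using level assms(2,3) unfolding level_succ_iff by (simp add: htv_uminus)
  moreover have "htv \<Phi> \<Delta> x \<ge> 1" "htv \<Phi> \<Delta> (- y) \<ge> 1"
    using htv_long_ge_1 x y \<open>positive x\<close> \<open>positive (- y)\<close> by auto
  ultimately show "x \<in> \<Delta>" "- y \<in> \<Delta>"
    using long_simple_if_htv_le_1 x y \<open>positive x\<close> \<open>positive (- y)\<close> by auto
qed

text \<open>\<open>\<sigma> + \<tau> = t \<gamma>\<close> with \<open>t = cartan \<sigma> \<gamma>\<close> a positive integer and \<open>\<gamma>\<close> a root with integral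
  coordinates, so \<open>t\<close> divides the coordinate \<open>1\<close> of \<open>\<sigma> + \<tau>\<close> on \<open>\<sigma>\<close>.\<close>
lemma edge_simple_to_uminus_simple_label:
  assumes edge: "edge \<Phi> \<Delta> \<sigma> \<gamma> (- \<tau>)" and "\<sigma> \<in> \<Delta>" "\<tau> \<in> \<Delta>" "\<sigma> \<noteq> \<tau>"
  shows "\<gamma> = \<sigma> + \<tau>"
proof -
  define t where "t = cartan \<sigma> \<gamma>"
  have \<gamma>: "\<gamma> \<in> \<Phi>" and \<sigma>: "\<sigma> \<in> \<Phi>" using edge unfolding edge_def long_def positive_root_def by auto
  have "t > 0" "- \<tau> = \<sigma> - t *\<^sub>R \<gamma>" using edge_reflects_down(1,2)[OF edge] unfolding t_def by auto
  then have sum: "\<sigma> + \<tau> = t *\<^sub>R \<gamma>" by (simp add: algebra_simps)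
  have "coord (\<sigma> + \<tau>) \<sigma> = 1" using assms(2-4) by (simp add: coord_add coord_simple)
  then have "t * coord \<gamma> \<sigma> = 1" unfolding sum coord_scaleR .
  then have "coord \<gamma> \<sigma> > 0" using zero_less_mult_pos[of t "coord \<gamma> \<sigma>"] \<open>t > 0\<close> by simp
  moreover have "coord \<gamma> \<sigma> \<in> \<int>" using root_coord_Ints_sign(1)[OF \<gamma>] assms(2) by blast
  ultimately have "coord \<gamma> \<sigma> \<ge> 1" using Ints_nonzero_abs_ge1[of "coord \<gamma> \<sigma>"] by simp
  moreover have "t \<ge> 1"
    using Ints_nonzero_abs_ge1[OF cartan_Ints[OF \<gamma> \<sigma>]] \<open>t > 0\<close> unfolding t_def by simp
  ultimately have "t = 1" using \<open>t * coord \<gamma> \<sigma> = 1\<close> mult_left_mono[of 1 "coord \<gamma> \<sigma>" t] by simp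
  then show ?thesis using sum by simp
qed

lemma edge_across_zero:
  assumes edge: "edge \<Phi> \<Delta> x \<gamma> y" and "positive x" "\<not> positive y"
  shows "x \<bullet> y \<noteq> 0" "\<gamma> \<in> \<Delta> \<Longrightarrow> y = - x"
proof -
  note simple = edge_across_zero_simple[OF assms]
  have x: "long \<Phi> x" and y: "long \<Phi> y" and \<gamma>: "\<gamma> \<in> \<Phi>"
    using edge unfolding edge_def positive_root_def by auto
  have sum: "\<gamma> = x - y" if "y \<noteq> - x"
  proof -
    have "x \<noteq> - y" using that by auto
    then show ?thesis using edge_simple_to_uminus_simple_label[of x \<gamma> "- y"] edge simple by simp
  qed
  show "x \<bullet> y \<noteq> 0"
  proof (cases "y = - x")
    case True
    then show ?thesis using simple(1) simple_roots root_nonzero by auto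
  next
    case False
    then have "\<gamma> \<bullet> \<gamma> = x \<bullet> x + y \<bullet> y - 2 * (x \<bullet> y)"
      using sum by (simp add: inner_diff_left inner_diff_right inner_commute)
    then show ?thesis
      using inner_self_le_max_sq[OF \<gamma>] x y max_sq_pos unfolding long_def by auto
  qed
  show "y = - x" if "\<gamma> \<in> \<Delta>"
  proof (rule ccontr)
    assume "y \<noteq> - x"
    then have "coord \<gamma> x = 1" "coord \<gamma> (- y) = 1"
      using sum simple by (auto simp: coord_diff coord_uminus[symmetric] coord_simple)
    then show False using that \<open>y \<noteq> - x\<close> by (auto simp: coord_simple split: if_splits)
  qed
qed

lemma path_across_zero:
  assumes "(edge_by G)\<^sup>*\<^sup>* \<beta> \<alpha>" "positive \<beta>" "\<not> positive \<alpha>"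
  obtains \<sigma> \<tau> \<gamma> where "\<sigma> \<in> \<Delta>" "\<tau> \<in> \<Delta>" "long \<Phi> \<sigma>" "long \<Phi> \<tau>" "\<sigma> \<bullet> \<tau> \<noteq> 0"
    "\<gamma> \<in> G" "\<gamma> \<in> \<Delta> \<Longrightarrow> \<sigma> = \<tau>" "rle \<Delta> \<sigma> \<beta>" "rle \<Delta> \<alpha> (- \<tau>)"
proof -
  obtain x y where xy: "(edge_by G)\<^sup>*\<^sup>* \<beta> x" "edge_by G x y" "(edge_by G)\<^sup>*\<^sup>* y \<alpha>"
    "positive x" "\<not> positive y"
    using rtranclp_exists_crossing[OF assms] by blast
  obtain \<gamma> where \<gamma>: "\<gamma> \<in> G" "edge \<Phi> \<Delta> x \<gamma> y" using xy(2) unfolding edge_by_def by blast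
  note across = edge_across_zero_simple[OF \<gamma>(2) xy(4,5)] edge_across_zero[OF \<gamma>(2) xy(4,5)]
  show thesis
  proof (rule that[of x "- y" \<gamma>])
    show "long \<Phi> x" "long \<Phi> (- y)" using \<gamma>(2) long_uminus unfolding edge_def by auto
    show "rle \<Delta> x \<beta>" using rtranclp_edge_by_rle[OF xy(1)] .
    show "rle \<Delta> \<alpha> (- (- y))" using rtranclp_edge_by_rle[OF xy(3)] by simp
  qed (use across \<gamma>(1) in auto)
qed

lemma edge_simple_to_uminus:
  assumes "\<delta> \<in> \<Delta>" "long \<Phi> \<delta>"
  shows "edge \<Phi> \<Delta> \<delta> \<delta> (- \<delta>)"
proof -
  have "\<delta> \<in> \<Phi>" "positive \<delta>" using assms(1) simple_roots positive_simple by auto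
  moreover have "htv \<Phi> \<Delta> \<delta> - htv \<Phi> \<Delta> (- \<delta>) = 2"
    using assms by (simp add: htv_uminus htv_simple weight_long)
  ultimately show ?thesis
    using assms(2) long_uminus[OF assms(2)] rs_refl_self not_positive_uminus[of \<delta>]
    unfolding edge_def positive_root_def level_succ_iff by simp
qed

text \<open>Distinct non-orthogonal long simple roots have Cartan integer \<open>-1\<close>.\<close>
lemma edge_simple_to_uminus_simple:
  assumes \<sigma>: "\<sigma> \<in> \<Delta>" "long \<Phi> \<sigma>" and \<tau>: "\<tau> \<in> \<Delta>" "long \<Phi> \<tau>"
    and "\<sigma> \<noteq> \<tau>" "\<sigma> \<bullet> \<tau> \<noteq> 0"
  shows "\<sigma> + \<tau> \<in> \<Phi>" "edge \<Phi> \<Delta> \<sigma> (\<sigma> + \<tau>) (- \<tau>)"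
proof -
  have roots: "\<sigma> \<in> \<Phi>" "\<tau> \<in> \<Phi>" using \<sigma>(1) \<tau>(1) simple_roots by auto
  have lengths: "\<sigma> \<bullet> \<sigma> = max_sq \<Phi>" "\<tau> \<bullet> \<tau> = max_sq \<Phi>" using \<sigma>(2) \<tau>(2) unfolding long_def by auto
  have "\<tau> \<noteq> - \<sigma>" using not_positive_uminus positive_simple \<sigma>(1) \<tau>(1) by metis
  note cartan = cartan_shorter_root[OF roots assms(6) assms(5)[symmetric] this]
  have "cartan \<sigma> \<tau> < 0"
    using simple_inner_nonpos[OF \<sigma>(1) \<tau>(1) assms(5)] assms(6) root_inner_self_pos[OF roots(2)]
    unfolding cartan_def by (simp add: divide_neg_pos)
  then have "cartan \<sigma> \<tau> = -1" using cartan(1,2) lengths max_sq_pos by auto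
  then have \<sigma>\<tau>: "\<sigma> \<bullet> \<tau> = - max_sq \<Phi> / 2"
    unfolding cartan_def using lengths max_sq_pos by (simp add: field_simps)
  have "\<sigma> + \<tau> = rs_refl \<tau> \<sigma>" using \<open>cartan \<sigma> \<tau> = -1\<close> by (simp add: rs_refl_eq)
  then show sum: "\<sigma> + \<tau> \<in> \<Phi>" using rs_refl_root roots by simp
  have "rs_refl (\<sigma> + \<tau>) \<sigma> = - \<tau>"
    using \<sigma>\<tau> lengths max_sq_pos
    by (simp add: rs_refl_def inner_add_left inner_add_right inner_commute)
  moreover have "positive (\<sigma> + \<tau>)"
    using positive_simple[OF \<sigma>(1)] positive_simple[OF \<tau>(1)] root_nonzero[OF sum]
    unfolding positive_iff_coord by (auto simp: coord_add)
  ultimately show "edge \<Phi> \<Delta> \<sigma> (\<sigma> + \<tau>) (- \<tau>)"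
    using \<sigma> \<tau> sum long_uminus positive_simple not_positive_uminus
    unfolding edge_def positive_root_def level_succ_iff
    by (simp add: htv_uminus htv_simple weight_long)
qed

lemma simple_path_if_same_sign:
  assumes "long \<Phi> \<alpha>" "long \<Phi> \<beta>" "rle \<Delta> \<alpha> \<beta>" "positive \<alpha> \<longleftrightarrow> positive \<beta>"
  shows "rs_simple_path \<Phi> \<Delta> \<beta> \<alpha>"
  unfolding rs_simple_path_def path_in_iff_rtranclp
  using assms simple_edges_if_same_sign by blast

lemma simple_path_across_zero_iff:
  assumes \<alpha>: "long \<Phi> \<alpha>" "\<not> positive \<alpha>" and \<beta>: "long \<Phi> \<beta>" "positive \<beta>"
  shows "rs_simple_path \<Phi> \<Delta> \<beta> \<alpha> \<longleftrightarrow> (\<exists>\<delta>\<in>\<Delta>. long \<Phi> \<delta> \<and> coord \<beta> \<delta> \<noteq> 0 \<and> coord \<alpha> \<delta> \<noteq> 0)"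
proof -
  have support: "rle \<Delta> \<delta> \<beta> \<longleftrightarrow> coord \<beta> \<delta> \<noteq> 0" "rle \<Delta> \<alpha> (- \<delta>) \<longleftrightarrow> coord \<alpha> \<delta> \<noteq> 0"
    if "\<delta> \<in> \<Delta>" for \<delta>
    using simple_rle_positive_root_iff[OF _ \<beta>(2) that] rle_uminus_simple_iff[OF _ \<alpha>(2) that]
      \<alpha>(1) \<beta>(1) unfolding long_def by simp_all
  show ?thesis
  proof
    assume "rs_simple_path \<Phi> \<Delta> \<beta> \<alpha>"
    then have "(edge_by \<Delta>)\<^sup>*\<^sup>* \<beta> \<alpha>" unfolding rs_simple_path_def path_in_iff_rtranclp by blast
    then obtain \<sigma> \<tau> \<gamma> where "\<sigma> \<in> \<Delta>" "\<tau> \<in> \<Delta>" "long \<Phi> \<sigma>" "long \<Phi> \<tau>" "\<sigma> \<bullet> \<tau> \<noteq> 0"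
      "\<gamma> \<in> \<Delta>" "\<gamma> \<in> \<Delta> \<Longrightarrow> \<sigma> = \<tau>" "rle \<Delta> \<sigma> \<beta>" "rle \<Delta> \<alpha> (- \<tau>)"
      by (rule path_across_zero[OF _ \<beta>(2) \<alpha>(2)]) blast
    then show "\<exists>\<delta>\<in>\<Delta>. long \<Phi> \<delta> \<and> coord \<beta> \<delta> \<noteq> 0 \<and> coord \<alpha> \<delta> \<noteq> 0"
      using support(1)[of \<sigma>] support(2)[of \<tau>] by auto
  next
    assume "\<exists>\<delta>\<in>\<Delta>. long \<Phi> \<delta> \<and> coord \<beta> \<delta> \<noteq> 0 \<and> coord \<alpha> \<delta> \<noteq> 0"
    then obtain \<delta> where \<delta>: "\<delta> \<in> \<Delta>" "long \<Phi> \<delta>" "coord \<beta> \<delta> \<noteq> 0" "coord \<alpha> \<delta> \<noteq> 0"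
      by blast
    have "rle \<Delta> \<delta> \<beta>" "rle \<Delta> \<alpha> (- \<delta>)" using support[OF \<delta>(1)] \<delta>(3,4) by simp_all
    have "(edge_by \<Delta>)\<^sup>*\<^sup>* \<beta> \<delta>"
      using simple_edges_if_same_sign[OF \<delta>(2) \<beta>(1) \<open>rle \<Delta> \<delta> \<beta>\<close>] positive_simple[OF \<delta>(1)] \<beta>(2)
      by simp
    moreover have "edge_by \<Delta> \<delta> (- \<delta>)"
      using edge_simple_to_uminus \<delta>(1,2) unfolding edge_by_def by blast
    moreover have "(edge_by \<Delta>)\<^sup>*\<^sup>* (- \<delta>) \<alpha>"
      using simple_edges_if_same_sign[OF \<alpha>(1) long_uminus[OF \<delta>(2)] \<open>rle \<Delta> \<alpha> (- \<delta>)\<close>] \<alpha>(2)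
        not_positive_uminus[OF positive_simple[OF \<delta>(1)]] by simp
    ultimately show "rs_simple_path \<Phi> \<Delta> \<beta> \<alpha>"
      unfolding rs_simple_path_def path_in_iff_rtranclp using \<beta>(1)
      by (meson rtranclp.rtrancl_into_rtrancl rtranclp_trans)
  qed
qed

lemma path_across_zero_iff:
  assumes \<alpha>: "long \<Phi> \<alpha>" "\<not> positive \<alpha>" and \<beta>: "long \<Phi> \<beta>" "positive \<beta>"
  shows "rpath \<Phi> \<Delta> \<beta> \<alpha> \<longleftrightarrow> (\<exists>\<sigma>\<in>\<Delta>. \<exists>\<tau>\<in>\<Delta>. long \<Phi> \<sigma> \<and> long \<Phi> \<tau> \<and> \<sigma> \<bullet> \<tau> \<noteq> 0 \<and>
    coord \<beta> \<sigma> \<noteq> 0 \<and> coord \<alpha> \<tau> \<noteq> 0)"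
proof -
  have support: "rle \<Delta> \<delta> \<beta> \<longleftrightarrow> coord \<beta> \<delta> \<noteq> 0" "rle \<Delta> \<alpha> (- \<delta>) \<longleftrightarrow> coord \<alpha> \<delta> \<noteq> 0"
    if "\<delta> \<in> \<Delta>" for \<delta>
    using simple_rle_positive_root_iff[OF _ \<beta>(2) that] rle_uminus_simple_iff[OF _ \<alpha>(2) that]
      \<alpha>(1) \<beta>(1) unfolding long_def by simp_all
  show ?thesis
  proof
    assume "rpath \<Phi> \<Delta> \<beta> \<alpha>"
    then have "(edge_by \<Phi>)\<^sup>*\<^sup>* \<beta> \<alpha>" unfolding rpath_def path_in_iff_rtranclp by blast
    then obtain \<sigma> \<tau> \<gamma> where "\<sigma> \<in> \<Delta>" "\<tau> \<in> \<Delta>" "long \<Phi> \<sigma>" "long \<Phi> \<tau>" "\<sigma> \<bullet> \<tau> \<noteq> 0"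
      "\<gamma> \<in> \<Phi>" "\<gamma> \<in> \<Delta> \<Longrightarrow> \<sigma> = \<tau>" "rle \<Delta> \<sigma> \<beta>" "rle \<Delta> \<alpha> (- \<tau>)"
      by (rule path_across_zero[OF _ \<beta>(2) \<alpha>(2)]) blast
    then show "\<exists>\<sigma>\<in>\<Delta>. \<exists>\<tau>\<in>\<Delta>. long \<Phi> \<sigma> \<and> long \<Phi> \<tau> \<and> \<sigma> \<bullet> \<tau> \<noteq> 0 \<and>
        coord \<beta> \<sigma> \<noteq> 0 \<and> coord \<alpha> \<tau> \<noteq> 0"
      using support(1)[of \<sigma>] support(2)[of \<tau>] by blast
  next
    assume "\<exists>\<sigma>\<in>\<Delta>. \<exists>\<tau>\<in>\<Delta>. long \<Phi> \<sigma> \<and> long \<Phi> \<tau> \<and> \<sigma> \<bullet> \<tau> \<noteq> 0 \<and>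
      coord \<beta> \<sigma> \<noteq> 0 \<and> coord \<alpha> \<tau> \<noteq> 0"
    then obtain \<sigma> \<tau> where \<sigma>: "\<sigma> \<in> \<Delta>" "long \<Phi> \<sigma>" "coord \<beta> \<sigma> \<noteq> 0"
      and \<tau>: "\<tau> \<in> \<Delta>" "long \<Phi> \<tau>" "coord \<alpha> \<tau> \<noteq> 0" and "\<sigma> \<bullet> \<tau> \<noteq> 0"
      by blast
    have "rle \<Delta> \<sigma> \<beta>" "rle \<Delta> \<alpha> (- \<tau>)" using support(1)[OF \<sigma>(1)] support(2)[OF \<tau>(1)] \<sigma> \<tau> by simp_all
    have "(edge_by \<Delta>)\<^sup>*\<^sup>* \<beta> \<sigma>"
      using simple_edges_if_same_sign[OF \<sigma>(2) \<beta>(1) \<open>rle \<Delta> \<sigma> \<beta>\<close>] positive_simple[OF \<sigma>(1)] \<beta>(2)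
      by simp
    moreover have "edge_by \<Phi> \<sigma> (- \<tau>)"
    proof (cases "\<sigma> = \<tau>")
      case True
      then show ?thesis
        using edge_simple_to_uminus \<sigma>(1,2) simple_roots unfolding edge_by_def by blast
    next
      case False
      then show ?thesis
        using edge_simple_to_uminus_simple[OF \<sigma>(1,2) \<tau>(1,2) False \<open>\<sigma> \<bullet> \<tau> \<noteq> 0\<close>]
        unfolding edge_by_def by blast
    qed
    moreover have "(edge_by \<Delta>)\<^sup>*\<^sup>* (- \<tau>) \<alpha>"
      using simple_edges_if_same_sign[OF \<alpha>(1) long_uminus[OF \<tau>(2)] \<open>rle \<Delta> \<alpha> (- \<tau>)\<close>] \<alpha>(2)
        not_positive_uminus[OF positive_simple[OF \<tau>(1)]] by simp
    ultimately show "rpath \<Phi> \<Delta> \<beta> \<alpha>"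
      unfolding rpath_def path_in_iff_rtranclp using \<beta>(1) rtranclp_edge_by_mono[OF simple_roots]
      by (meson converse_rtranclp_into_rtranclp rtranclp_trans)
  qed
qed

end

theorem proposition1p11:
  fixes \<Phi> \<Delta> :: "'a::euclidean_space set" and \<alpha> \<beta> :: 'a
    and J K :: "'a set" and n m :: "'a \<Rightarrow> int"
  assumes "root_system \<Phi>" and "rs_reduced \<Phi>" and "irreducible_rs \<Phi>" and "rs_basis \<Phi> \<Delta>"
    and "long \<Phi> \<alpha>" and "long \<Phi> \<beta>" and "rle \<Delta> \<alpha> \<beta>"
    and "J \<subseteq> \<Delta>" and "J \<noteq> {}" and "K \<subseteq> \<Delta>" and "K \<noteq> {}"
    and "\<beta> = (\<Sum>\<sigma>\<in>J. of_int (n \<sigma>) *\<^sub>R \<sigma>)"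
    and "(\<forall>\<sigma>\<in>J. n \<sigma> > 0) \<or> (\<forall>\<sigma>\<in>J. n \<sigma> < 0)"
    and "\<alpha> = (\<Sum>\<tau>\<in>K. of_int (m \<tau>) *\<^sub>R \<tau>)"
    and "(\<forall>\<tau>\<in>K. m \<tau> > 0) \<or> (\<forall>\<tau>\<in>K. m \<tau> < 0)"
  shows "(rless \<Delta> 0 \<alpha> \<longrightarrow> rs_simple_path \<Phi> \<Delta> \<beta> \<alpha>) \<and>
         (rless \<Delta> \<alpha> 0 \<and> rless \<Delta> 0 \<beta> \<longrightarrow>
            (rs_simple_path \<Phi> \<Delta> \<beta> \<alpha> \<longleftrightarrow> (\<exists>\<delta>\<in>J \<inter> K. long \<Phi> \<delta>)) \<and>
            (rpath \<Phi> \<Delta> \<beta> \<alpha> \<longleftrightarrow>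
               (\<exists>\<sigma>\<in>J. \<exists>\<tau>\<in>K. long \<Phi> \<sigma> \<and> long \<Phi> \<tau> \<and> \<sigma> \<bullet> \<tau> \<noteq> 0))) \<and>
         (rless \<Delta> \<beta> 0 \<longrightarrow> rs_simple_path \<Phi> \<Delta> \<beta> \<alpha>)"
proof -
  interpret irreducible_root_basis \<Phi> \<Delta> using assms(1-4) by unfold_locales
  have roots: "\<alpha> \<in> \<Phi>" "\<beta> \<in> \<Phi>" using assms(5,6) unfolding long_def by auto
  have "\<forall>\<sigma>\<in>J. n \<sigma> \<noteq> 0" "\<forall>\<tau>\<in>K. m \<tau> \<noteq> 0" using assms(13,15) by fastforce+
  then have J: "coord \<beta> \<sigma> \<noteq> 0 \<longleftrightarrow> \<sigma> \<in> J" and K: "coord \<alpha> \<tau> \<noteq> 0 \<longleftrightarrow> \<tau> \<in> K" for \<sigma> \<tau>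
    using coord_ne_zero_iff_in_support assms(8,10,12,14) by blast+
  note same_sign = simple_path_if_same_sign[OF assms(5-7)]
  show ?thesis
  proof (intro conjI impI)
    assume "positive \<alpha>"
    then show "rs_simple_path \<Phi> \<Delta> \<beta> \<alpha>" using same_sign positive_if_rle[OF assms(7) _ roots(2)] by blast
  next
    assume "rless \<Delta> \<beta> 0"
    then show "rs_simple_path \<Phi> \<Delta> \<beta> \<alpha>"
      using same_sign not_positive_if_rle[OF assms(7) _ roots] not_positive_if_rless_zero by blast
  next
    assume "rless \<Delta> \<alpha> 0 \<and> positive \<beta>"
    then have \<alpha>: "\<not> positive \<alpha>" and \<beta>: "positive \<beta>" using not_positive_if_rless_zero by auto
    show "rs_simple_path \<Phi> \<Delta> \<beta> \<alpha> \<longleftrightarrow> (\<exists>\<delta>\<in>J \<inter> K. long \<Phi> \<delta>)"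
      using simple_path_across_zero_iff[OF assms(5) \<alpha> assms(6) \<beta>] J K assms(8,10) by blast
    show "rpath \<Phi> \<Delta> \<beta> \<alpha> \<longleftrightarrow> (\<exists>\<sigma>\<in>J. \<exists>\<tau>\<in>K. long \<Phi> \<sigma> \<and> long \<Phi> \<tau> \<and> \<sigma> \<bullet> \<tau> \<noteq> 0)"
      using path_across_zero_iff[OF assms(5) \<alpha> assms(6) \<beta>] J K assms(8,10) by blast
  qed
qed

end
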